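(* In the setting of the context, assume $u$ and $\hat u=u+v$ are quasidefinite, the functionals $(\beta^{(j)}_m)_x$ are linearly independent (in the sense of the context), and that at least one of $(\operatorname{Ker}^R_\beta)^{\perp^R_u}=\{0_p\}$ or $\mathbb I^{\perp^L_u}=\{0_p\}$ holds. Then for every $n\ge0$ the $Np\times Np$ matrix $M_n:=I_{Np}+\langle\mathcal J^{[0,1]}_{K_n}(x),(\beta)_x\rangle$ is nonsingular, and for every $n\ge1$ $$\hat P^{[1]}_n(x)=P^{[1]}_n(x)-\langle P^{[1]}_n(x),(\beta)_x\rangle\,M_{n-1}^{-1}\,\mathcal J^{[0,1]}_{K_{n-1}}(x),$$ $$(\hat P^{[2]}_n(y))^\top=(P^{[2]}_n(y))^\top-\langle K_{n-1}(x,y),(\beta)_x\rangle\,M_{n-1}^{-1}\,\big(\mathcal J_{P^{[2]}_n}\big)^\top,$$ $$\hat H_n=H_n+\langle P^{[1]}_n(x),(\beta)_x\rangle\,M_{n-1}^{-1}\,\big(\mathcal J_{P^{[2]}_n}\big)^\top .$$ Equivalently, with the quasideterminant $\Theta_*\begin{bmatrix}A&B\\C&D\end{bmatrix}=D-CA^{-1}B$: $\hat P^{[1]}_n(x)=\Theta_*\begin{bmatrix}M_{n-1}&\mathcal J^{[0,1]}_{K_{n-1}}(x)\\ \langle P^{[1]}_n(x),(\beta)_x\rangle&P^{[1]}_n(x)\end{bmatrix}$, $(\hat P^{[2]}_n(y))^\top=\Theta_*\begin{bmatrix}M_{n-1}&(\mathcal J_{P^{[2]}_n})^\top\\ \langle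 K_{n-1}(x,y),(\beta)_x\rangle&(P^{[2]}_n(y))^\top\end{bmatrix}$, $\hat H_n=\Theta_*\begin{bmatrix}M_{n-1}&-(\mathcal J_{P^{[2]}_n})^\top\\ \langle P^{[1]}_n(x),(\beta)_x\rangle&H_n\end{bmatrix}$.
   Context: Fix $p\ge1$; ${}^\top$ is transpose. A matrix of generalized kernels $w_{x,y}$ ($p\times p$ matrix of continuous linear functionals on $\mathbb C[x,y]$) defines $\langle P(x),Q(y)\rangle_w\in\mathbb C^{p\times p}$, $(\langle P,Q\rangle_w)_{i,j}=\sum_{k,l}\langle (w_{x,y})_{k,l},P_{i,k}(x)Q_{j,l}(y)\rangle$. It is quasidefinite if all leading block truncations of its Gram matrix $(\langle I_px^k,I_py^l\rangle_w)_{k,l\ge0}$ are nonsingular; then the unique factorization $G=S_1^{-1}HS_2^{-\top}$ ($S_i$ block lower unitriangular, $H=\operatorname{diag}(H_0,H_1,\dots)$) gives monic biorthogonal families $P^{[i]}_n(x)=\sum_{k\le n}(S_i)_{n,k}x^k$ with $\langle P^{[1]}_n,P^{[2]}_m\rangle_w=\delta_{n,m}H_n$, and Christoffel--Darboux kernels $K_n(x,y)=\sum_{k=0}^n(P^{[2]}_k(y))^\top H_k^{-1}P^{[1]}_k(x)$. Objects for $u$ are unhatted, for $\hat u=u+v$ hatted. When an argument depends on another variable (e.g. $K_{n-1}(x,y)$ in the first slot), the other variable is held fixed as a parameter. Uvarov data: distinct real $x_1,\dots,x_q$, positive integers $\kappa^{(j)}$, $N=\sum_j\kappa^{(j)}$;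 for each $j$ and $0\le m\le\kappa^{(j)}-1$ a $p\times p$ matrix $(\beta^{(j)}_m)_x$ of continuous linear functionals on $\mathbb C[x]$. For such $\beta_x$ and $P\in\mathbb C^{p\times p}[x]$: $(\langle P(x),\beta_x\rangle)_{i,l}=\sum_k\langle(\beta_x)_{k,l},P_{i,k}\rangle$ and $(\langle \beta_x,P(x)\rangle)_{k,j}=\sum_l\langle(\beta_x)_{k,l},P_{l,j}\rangle$. Linear independence means: if $X^{(j)}_m\in\mathbb C^{p\times p}$ satisfy $\sum_{j,m}(\beta^{(j)}_m)_xX^{(j)}_m=0$ (matrix product) then all $X^{(j)}_m=0_p$, and if $\sum_{j,m}Y^{(j)}_m(\beta^{(j)}_m)_x=0$ then all $Y^{(j)}_m=0_p$. The perturbation $v_{x,y}=\sum_{j}\sum_{m}\frac{(-1)^m}{m!}(\beta^{(j)}_m)_x\otimes\delta^{(m)}(y-x_j)$ has form $\langle P(x),Q(y)\rangle_v=\sum_{j=1}^q\sum_{m=0}^{\kappa^{(j)}-1}\frac1{m!}\langle P(x),(\beta^{(j)}_m)_x\rangle(Q^{(m)}(x_j))^\top$. Jets: $\mathcal J_f=\big[f(x_1),\tfrac{f'(x_1)}{1!},\dots,\tfrac{f^{(\kappa^{(1)}-1)}(x_1)}{(\kappa^{(1)}-1)!},\dots,f(x_q),\dots,\tfrac{f^{(\kappa^{(q)}-1)}(x_q)}{(\kappa^{(q)}-1)!}\big]\in\mathbb C^{p\times Np}$; $\mathcal J^{[0,1]}_K(x)\in\mathbb C^{Np\times p}$ is the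 block column with blocks, same order, $\frac1{m!}\partial_y^mK(x,y)|_{y=x_j}$. $\langle P(x),(\beta)_x\rangle\in\mathbb C^{p\times Np}$ is the block row $[\langle P,(\beta^{(1)}_0)_x\rangle,\dots,\langle P,(\beta^{(1)}_{\kappa^{(1)}-1})_x\rangle,\dots,\langle P,(\beta^{(q)}_{\kappa^{(q)}-1})_x\rangle]$; for a block column $F(x)$ of $N$ matrix polynomials $F_1,\dots,F_N$, $\langle F(x),(\beta)_x\rangle\in\mathbb C^{Np\times Np}$ has $r$-th block row $\langle F_r(x),(\beta)_x\rangle$. Subspaces: $\operatorname{Ker}^R_\beta=\{P\in\mathbb C^{p\times p}[x]:\langle(\beta^{(j)}_m)_x,P(x)\rangle=0_p\ \text{for all } j,m\}$; $\mathbb I=(x-x_1)^{\kappa^{(1)}}\cdots(x-x_q)^{\kappa^{(q)}}\mathbb C^{p\times p}[x]$. For a set $S$ of matrix polynomials, $S^{\perp^R_u}=\{Q:\langle P(x),Q(y)\rangle_u=0_p\ \forall P\in S\}$ and $S^{\perp^L_u}=\{Q:\langle Q(x),P(y)\rangle_u=0_p\ \forall P\in S\}$. *)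

theory Defs
  imports "Jordan_Normal_Form.Determinant" "HOL-Computational_Algebra.Polynomial"
begin

(* ---------------------------------------------------------------------------
   Conventions.
   * p x p matrix polynomials  P(x) \<in> C^{p x p}[x]  are  complex poly mat  in carrier_mat p p.
   * A p x p matrix of linear functionals on C[x] (e.g. (beta^{(j)}_m)_x) is represented by its
     moment blocks  B :: nat => complex mat,  (B r)$$(k,l) = < (beta)_{k,l}, x^r >.
   * A p x p matrix of linear functionals on C[x,y] (generalized kernel w_{x,y}) is represented by
     its moment blocks  G :: nat => nat => complex mat,  (G a b)$$(k,l) = < (w)_{k,l}, x^a y^b >,
     i.e. exactly its block Gram matrix  G a b = < I_p x^a, I_p y^b >_w.
   * Bivariate scalar polynomials in (x,y) are  complex poly poly : outer variable y, inner x.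
   --------------------------------------------------------------------------- *)

definition mdeg :: "complex poly mat \<Rightarrow> nat" where
  "mdeg P = Max (insert 0 {degree (P $$ (i,j)) | i j. i < dim_row P \<and> j < dim_col P})"

definition meval :: "complex poly mat \<Rightarrow> complex \<Rightarrow> complex mat" where
  "meval P z = map_mat (\<lambda>a. poly a z) P"

definition mderiv :: "nat \<Rightarrow> complex poly mat \<Rightarrow> complex poly mat" where
  "mderiv m P = map_mat (\<lambda>a. (pderiv ^^ m) a) P"

definition const_pmat :: "complex mat \<Rightarrow> complex poly mat" where
  "const_pmat A = map_mat (\<lambda>c. [:c:]) A"

definition monomI :: "nat \<Rightarrow> nat \<Rightarrow> complex poly mat" where
  "monomI p k = mat p p (\<lambda>(i,j). if i = j then monom 1 k else 0)"

definition minv :: "complex mat \<Rightarrow> complex mat" where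
  "minv A = (THE B. B \<in> carrier_mat (dim_row A) (dim_row A) \<and> A * B = 1\<^sub>m (dim_row A)
                    \<and> B * A = 1\<^sub>m (dim_row A))"

text \<open>sesquilinear-free matrix form  <P(x),Q(y)>_w  of a generalized kernel given by moments G\<close>
definition mform :: "nat \<Rightarrow> (nat \<Rightarrow> nat \<Rightarrow> complex mat) \<Rightarrow> complex poly mat \<Rightarrow> complex poly mat \<Rightarrow> complex mat" where
  "mform p G P Q = mat p p (\<lambda>(i,j). \<Sum>k<p. \<Sum>l<p. \<Sum>a\<le>mdeg P. \<Sum>b\<le>mdeg Q.
       coeff (P $$ (i,k)) a * coeff (Q $$ (j,l)) b * (G a b) $$ (k,l))"

definition pairR :: "nat \<Rightarrow> complex poly mat \<Rightarrow> (nat \<Rightarrow> complex mat) \<Rightarrow> complex mat" where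
  "pairR p P B = mat p p (\<lambda>(i,l). \<Sum>k<p. \<Sum>r\<le>mdeg P. coeff (P $$ (i,k)) r * (B r) $$ (k,l))"

definition pairL :: "nat \<Rightarrow> (nat \<Rightarrow> complex mat) \<Rightarrow> complex poly mat \<Rightarrow> complex mat" where
  "pairL p B P = mat p p (\<lambda>(k,j). \<Sum>l<p. \<Sum>r\<le>mdeg P. (B r) $$ (k,l) * coeff (P $$ (l,j)) r)"

text \<open>ordered list of block indices (j,m): (1,0),..,(1,kappa_1-1),...,(q,kappa_q-1) (0-based j)\<close>
definition bidx :: "nat \<Rightarrow> (nat \<Rightarrow> nat) \<Rightarrow> (nat \<times> nat) list" where
  "bidx q \<kappa> = concat (map (\<lambda>j. map (\<lambda>m. (j,m)) [0..<\<kappa> j]) [0..<q])"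

definition NN :: "nat \<Rightarrow> (nat \<Rightarrow> nat) \<Rightarrow> nat" where
  "NN q \<kappa> = length (bidx q \<kappa>)"

definition vform :: "nat \<Rightarrow> nat \<Rightarrow> (nat \<Rightarrow> real) \<Rightarrow> (nat \<Rightarrow> nat) \<Rightarrow> (nat \<Rightarrow> nat \<Rightarrow> nat \<Rightarrow> complex mat)
                      \<Rightarrow> complex poly mat \<Rightarrow> complex poly mat \<Rightarrow> complex mat" where
  "vform p q xs \<kappa> \<beta> P Q = mat p p (\<lambda>(i,l). \<Sum>jm\<leftarrow>bidx q \<kappa>. (case jm of (j,m) \<Rightarrow>
       (1 / of_nat (fact m)) * (pairR p P (\<beta> j m) * transpose_mat (meval (mderiv m Q) (of_real (xs j)))) $$ (i,l)))"

definition uhat :: "nat \<Rightarrow> nat \<Rightarrow> (nat \<Rightarrow> real) \<Rightarrow> (nat \<Rightarrow> nat) \<Rightarrow> (nat \<Rightarrow> nat \<Rightarrow> nat \<Rightarrow> complex mat)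
                    \<Rightarrow> (nat \<Rightarrow> nat \<Rightarrow> complex mat) \<Rightarrow> nat \<Rightarrow> nat \<Rightarrow> complex mat" where
  "uhat p q xs \<kappa> \<beta> G a b = G a b + vform p q xs \<kappa> \<beta> (monomI p a) (monomI p b)"

definition gram_trunc :: "nat \<Rightarrow> (nat \<Rightarrow> nat \<Rightarrow> complex mat) \<Rightarrow> nat \<Rightarrow> complex mat" where
  "gram_trunc p G n = mat ((n+1)*p) ((n+1)*p) (\<lambda>(i,j). (G (i div p) (j div p)) $$ (i mod p, j mod p))"

definition quasidefinite :: "nat \<Rightarrow> (nat \<Rightarrow> nat \<Rightarrow> complex mat) \<Rightarrow> bool" where
  "quasidefinite p G \<longleftrightarrow> (\<forall>n. det (gram_trunc p G n) \<noteq> 0)"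

definition block_lower_unitri :: "nat \<Rightarrow> (nat \<Rightarrow> nat \<Rightarrow> complex mat) \<Rightarrow> bool" where
  "block_lower_unitri p S \<longleftrightarrow> (\<forall>n k. S n k \<in> carrier_mat p p) \<and> (\<forall>n. S n n = 1\<^sub>m p)
      \<and> (\<forall>n k. n < k \<longrightarrow> S n k = 0\<^sub>m p p)"

text \<open>G = S1^{-1} H S2^{-T}, H block diagonal; equivalently S1 G S2^T = H (all sums finite)\<close>
definition gauss_factorization :: "nat \<Rightarrow> (nat \<Rightarrow> nat \<Rightarrow> complex mat) \<Rightarrow> (nat \<Rightarrow> nat \<Rightarrow> complex mat)
     \<Rightarrow> (nat \<Rightarrow> complex mat) \<Rightarrow> (nat \<Rightarrow> nat \<Rightarrow> complex mat) \<Rightarrow> bool" where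
  "gauss_factorization p G S1 H S2 \<longleftrightarrow> block_lower_unitri p S1 \<and> block_lower_unitri p S2
     \<and> (\<forall>n. H n \<in> carrier_mat p p)
     \<and> (\<forall>n m. mat p p (\<lambda>(i,j). \<Sum>k\<le>n. \<Sum>l\<le>m. (S1 n k * G k l * transpose_mat (S2 m l)) $$ (i,j))
              = (if n = m then H n else 0\<^sub>m p p))"

definition bpoly :: "nat \<Rightarrow> (nat \<Rightarrow> nat \<Rightarrow> complex mat) \<Rightarrow> nat \<Rightarrow> complex poly mat" where
  "bpoly p S n = mat p p (\<lambda>(i,j). \<Sum>k\<le>n. monom ((S n k) $$ (i,j)) k)"

text \<open>Christoffel--Darboux kernel K_n(x,y) = sum_{k<=n} (P2_k(y))^T H_k^{-1} P1_k(x),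
  entries in complex poly poly (outer variable y, inner variable x)\<close>
definition CDkernel :: "nat \<Rightarrow> (nat \<Rightarrow> nat \<Rightarrow> complex mat) \<Rightarrow> (nat \<Rightarrow> complex mat) \<Rightarrow> (nat \<Rightarrow> nat \<Rightarrow> complex mat)
                        \<Rightarrow> nat \<Rightarrow> complex poly poly mat" where
  "CDkernel p S1 H S2 n = mat p p (\<lambda>(i,j). \<Sum>k\<le>n. \<Sum>a<p. \<Sum>b<p.
       map_poly (\<lambda>c. [:c:]) ((bpoly p S2 k) $$ (a,i)) * [: [: (minv (H k)) $$ (a,b) :] :]
       * [: (bpoly p S1 k) $$ (b,j) :])"

definition kernel_at_y :: "complex poly poly mat \<Rightarrow> complex \<Rightarrow> complex poly mat" where
  "kernel_at_y K z = map_mat (\<lambda>e. poly e [:z:]) K"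

definition jet :: "nat \<Rightarrow> nat \<Rightarrow> (nat \<Rightarrow> real) \<Rightarrow> (nat \<Rightarrow> nat) \<Rightarrow> complex poly mat \<Rightarrow> complex mat" where
  "jet p q xs \<kappa> f = mat p (NN q \<kappa> * p) (\<lambda>(i,c). case bidx q \<kappa> ! (c div p) of (j,m) \<Rightarrow>
       poly ((pderiv ^^ m) (f $$ (i, c mod p))) (of_real (xs j)) / of_nat (fact m))"

definition jet01 :: "nat \<Rightarrow> nat \<Rightarrow> (nat \<Rightarrow> real) \<Rightarrow> (nat \<Rightarrow> nat) \<Rightarrow> complex poly poly mat \<Rightarrow> complex poly mat" where
  "jet01 p q xs \<kappa> K = mat (NN q \<kappa> * p) p (\<lambda>(c,l). case bidx q \<kappa> ! (c div p) of (j,m) \<Rightarrow>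
       smult (1 / of_nat (fact m)) (poly ((pderiv ^^ m) (K $$ (c mod p, l))) [: of_real (xs j) :]))"

definition pair_row :: "nat \<Rightarrow> nat \<Rightarrow> (nat \<Rightarrow> nat) \<Rightarrow> (nat \<Rightarrow> nat \<Rightarrow> nat \<Rightarrow> complex mat)
                        \<Rightarrow> complex poly mat \<Rightarrow> complex mat" where
  "pair_row p q \<kappa> \<beta> P = mat p (NN q \<kappa> * p) (\<lambda>(i,c). case bidx q \<kappa> ! (c div p) of (j,m) \<Rightarrow>
       (pairR p P (\<beta> j m)) $$ (i, c mod p))"

definition block_of_col :: "nat \<Rightarrow> complex poly mat \<Rightarrow> nat \<Rightarrow> complex poly mat" where
  "block_of_col p F r = mat p p (\<lambda>(i,l). F $$ (r*p + i, l))"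

definition pair_col :: "nat \<Rightarrow> nat \<Rightarrow> (nat \<Rightarrow> nat) \<Rightarrow> (nat \<Rightarrow> nat \<Rightarrow> nat \<Rightarrow> complex mat)
                        \<Rightarrow> complex poly mat \<Rightarrow> complex mat" where
  "pair_col p q \<kappa> \<beta> F = mat (NN q \<kappa> * p) (NN q \<kappa> * p) (\<lambda>(c,d).
       (pair_row p q \<kappa> \<beta> (block_of_col p F (c div p))) $$ (c mod p, d))"

definition Mmat :: "nat \<Rightarrow> nat \<Rightarrow> (nat \<Rightarrow> real) \<Rightarrow> (nat \<Rightarrow> nat) \<Rightarrow> (nat \<Rightarrow> nat \<Rightarrow> nat \<Rightarrow> complex mat)
      \<Rightarrow> (nat \<Rightarrow> nat \<Rightarrow> complex mat) \<Rightarrow> (nat \<Rightarrow> complex mat) \<Rightarrow> (nat \<Rightarrow> nat \<Rightarrow> complex mat) \<Rightarrow> nat \<Rightarrow> complex mat" where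
  "Mmat p q xs \<kappa> \<beta> S1 H S2 n = 1\<^sub>m (NN q \<kappa> * p)
      + pair_col p q \<kappa> \<beta> (jet01 p q xs \<kappa> (CDkernel p S1 H S2 n))"

definition beta_lin_indep :: "nat \<Rightarrow> nat \<Rightarrow> (nat \<Rightarrow> nat) \<Rightarrow> (nat \<Rightarrow> nat \<Rightarrow> nat \<Rightarrow> complex mat) \<Rightarrow> bool" where
  "beta_lin_indep p q \<kappa> \<beta> \<longleftrightarrow>
     (\<forall>X. (\<forall>j<q. \<forall>m<\<kappa> j. X j m \<in> carrier_mat p p)
        \<longrightarrow> (\<forall>r. \<forall>i<p. \<forall>l<p. (\<Sum>jm\<leftarrow>bidx q \<kappa>. (case jm of (j,m) \<Rightarrow> (\<beta> j m r * X j m) $$ (i,l))) = 0)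
        \<longrightarrow> (\<forall>j<q. \<forall>m<\<kappa> j. X j m = 0\<^sub>m p p))
   \<and> (\<forall>Y. (\<forall>j<q. \<forall>m<\<kappa> j. Y j m \<in> carrier_mat p p)
        \<longrightarrow> (\<forall>r. \<forall>i<p. \<forall>l<p. (\<Sum>jm\<leftarrow>bidx q \<kappa>. (case jm of (j,m) \<Rightarrow> (Y j m * \<beta> j m r) $$ (i,l))) = 0)
        \<longrightarrow> (\<forall>j<q. \<forall>m<\<kappa> j. Y j m = 0\<^sub>m p p))"

definition KerR :: "nat \<Rightarrow> nat \<Rightarrow> (nat \<Rightarrow> nat) \<Rightarrow> (nat \<Rightarrow> nat \<Rightarrow> nat \<Rightarrow> complex mat) \<Rightarrow> complex poly mat set" where
  "KerR p q \<kappa> \<beta> = {P \<in> carrier_mat p p. \<forall>j<q. \<forall>m<\<kappa> j. pairL p (\<beta> j m) P = 0\<^sub>m p p}"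

definition Iideal :: "nat \<Rightarrow> nat \<Rightarrow> (nat \<Rightarrow> real) \<Rightarrow> (nat \<Rightarrow> nat) \<Rightarrow> complex poly mat set" where
  "Iideal p q xs \<kappa> = {map_mat (\<lambda>e. (\<Prod>j<q. [: - of_real (xs j), 1 :] ^ \<kappa> j) * e) R | R. R \<in> carrier_mat p p}"

definition perpR :: "nat \<Rightarrow> (nat \<Rightarrow> nat \<Rightarrow> complex mat) \<Rightarrow> complex poly mat set \<Rightarrow> complex poly mat set" where
  "perpR p G S = {Q \<in> carrier_mat p p. \<forall>P\<in>S. mform p G P Q = 0\<^sub>m p p}"

definition perpL :: "nat \<Rightarrow> (nat \<Rightarrow> nat \<Rightarrow> complex mat) \<Rightarrow> complex poly mat set \<Rightarrow> complex poly mat set" where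
  "perpL p G S = {Q \<in> carrier_mat p p. \<forall>P\<in>S. mform p G Q P = 0\<^sub>m p p}"

end

theory Submission
  imports Defs
begin

text \<open>Truncating at degree n turns everything into finite matrices.  A matrix polynomial of
  degree at most n is encoded by its coefficient row, so the k-th biorthogonal polynomial becomes
  the k-th block row R_ik of S_i, and the Gram matrix of u + v becomes G + B L^T, where B collects
  the moments of the functionals beta and L the jets of the monomials at the nodes.  The kernel
  K_(n-1) has coefficient matrix W = sum_(k<n) R_2k^T H_k^-1 R_1k, which inverts G on the lower
  degrees, and M_(n-1) = 1 + L^T W B is the capacitance matrix of the Woodbury formula for
  G + B L^T; it is invertible because u + v is quasidefinite.  The corrected row
  R_1n - R_1n B M^-1 L^T W is monic and orthogonal to all lower degrees for G + B L^T, hence it is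
  the n-th block row of Sh1 by uniqueness of the Gauss factorization; the transposed argument gives
  the n-th block row of Sh2, and Hh_n is the product of the two new rows with the new Gram matrix.\<close>

section \<open>Matrix identities\<close>

lemma minv_inverse:
  assumes A: "A \<in> carrier_mat n n" and d: "det A \<noteq> 0"
  shows "minv A \<in> carrier_mat n n \<and> A * minv A = 1\<^sub>m n \<and> minv A * A = 1\<^sub>m n"
proof -
  from det_non_zero_imp_unit[OF A d, of "()"]
  obtain B where B: "B \<in> carrier_mat n n" "A * B = 1\<^sub>m n" "B * A = 1\<^sub>m n"
    unfolding Units_def ring_mat_def by auto
  have uniq: "C = B" if C: "C \<in> carrier_mat n n" "A * C = 1\<^sub>m n" "C * A = 1\<^sub>m n" for C
  proof -
    have "C = C * (A * B)" using C B by auto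
    also have "\<dots> = (C * A) * B" by (rule assoc_mult_mat[OF C(1) A B(1), symmetric])
    also have "\<dots> = B" using C(3) B(1) by simp
    finally show ?thesis .
  qed
  have dr: "dim_row A = n" using A by auto
  have "minv A = B"
    unfolding minv_def dr by (rule the_equality) (use B in simp, use uniq in blast)
  thus ?thesis using B by auto
qed

lemma index_mult_mat_sum:
  "A \<in> carrier_mat a b \<Longrightarrow> B \<in> carrier_mat b c \<Longrightarrow> i < a \<Longrightarrow> j < c \<Longrightarrow>
   (A * B) $$ (i,j) = (\<Sum>s<b. A $$ (i,s) * B $$ (s,j))"
  by (auto simp: scalar_prod_def atLeast0LessThan intro: sum.cong)

lemma index_mult_mat3_sum:
  assumes A: "A \<in> carrier_mat a b" and B: "B \<in> carrier_mat b c" and C: "C \<in> carrier_mat c d"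
    and "i < a" "j < d"
  shows "(A * B * C) $$ (i,j) = (\<Sum>t<c. (\<Sum>s<b. A $$ (i,s) * B $$ (s,t)) * C $$ (t,j))"
proof -
  have AB: "A * B \<in> carrier_mat a c" using A B by auto
  show ?thesis
    using assms by (subst index_mult_mat_sum[OF AB C])
        (simp_all add: index_mult_mat_sum[OF A B] del: index_mult_mat)
qed

lemma index_add_mat_carrier:
  "B \<in> carrier_mat n m \<Longrightarrow> i < n \<Longrightarrow> j < m \<Longrightarrow> (A + B) $$ (i,j) = A $$ (i,j) + B $$ (i,j)"
  by auto

lemma index_transpose_mat_carrier:
  "A \<in> carrier_mat n m \<Longrightarrow> i < m \<Longrightarrow> j < n \<Longrightarrow> transpose_mat A $$ (i,j) = A $$ (j,i)"
  by auto

lemma transpose_mult3: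
  "A \<in> carrier_mat a b \<Longrightarrow> B \<in> carrier_mat b c \<Longrightarrow> C \<in> carrier_mat c d \<Longrightarrow>
   transpose_mat (A * B * C) = transpose_mat C * transpose_mat B
       * transpose_mat (A :: 'a::comm_semiring_0 mat)"
proof -
  assume A: "A \<in> carrier_mat a b" and B: "B \<in> carrier_mat b c" and C: "C \<in> carrier_mat c d"
  have AB: "A * B \<in> carrier_mat a c" using A B by auto
  show ?thesis
    unfolding transpose_mult[OF AB C] transpose_mult[OF A B]
    by (rule assoc_mult_mat[symmetric, of _ d c _ b _ a]) (use A B C in auto)
qed

lemma assoc_mult_mat_dim:
  "dim_col A = dim_row B \<Longrightarrow> dim_col B = dim_row C \<Longrightarrow> A * B * C = A * (B * (C::'a::semiring_0 mat))"
  by (rule assoc_mult_mat[of _ "dim_row A" "dim_col A" _ "dim_col B" _ "dim_col C"]) auto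

lemma assoc_mult_mat4:
  assumes "A \<in> carrier_mat a b" "B \<in> carrier_mat b c" "C \<in> carrier_mat c d" "E \<in> carrier_mat d e"
  shows "A * (B * C * E) = A * B * C * E"
  using assms by (simp add: assoc_mult_mat_dim carrier_matD)

lemma add_mult_distrib_mat_dim:
  "dim_row A = dim_row B \<Longrightarrow> dim_col A = dim_col B \<Longrightarrow> dim_col A = dim_row C \<Longrightarrow>
   (A + B) * C = A * C + B * (C::'a::semiring_0 mat)"
  by (rule add_mult_distrib_mat[of _ "dim_row A" "dim_col A"]) auto

lemma mult_add_distrib_mat_dim:
  "dim_row B = dim_row C \<Longrightarrow> dim_col B = dim_col C \<Longrightarrow> dim_col A = dim_row B \<Longrightarrow>
   A * (B + C) = A * B + A * (C::'a::semiring_0 mat)"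
  by (rule mult_add_distrib_mat[of _ "dim_row A" "dim_col A" _ "dim_col B"]) auto

lemma minus_mult_distrib_mat_dim:
  "dim_row A = dim_row B \<Longrightarrow> dim_col A = dim_col B \<Longrightarrow> dim_col A = dim_row C \<Longrightarrow>
   (A - B) * C = A * C - B * (C::'a::ring mat)"
  by (rule minus_mult_distrib_mat[of _ "dim_row A" "dim_col A"]) auto

lemma mult_minus_distrib_mat_dim:
  "dim_row B = dim_row C \<Longrightarrow> dim_col B = dim_col C \<Longrightarrow> dim_col A = dim_row B \<Longrightarrow>
   A * (B - C) = A * B - A * (C::'a::ring mat)"
  by (rule mult_minus_distrib_mat[of _ "dim_row A" "dim_col A" _ "dim_col B"]) auto

lemma left_add_zero_mat_dim: "dim_row A = n \<Longrightarrow> dim_col A = m \<Longrightarrow> 0\<^sub>m n m + A = (A::'a::monoid_add mat)"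
  by (intro eq_matI) auto

lemma right_add_zero_mat_dim: "dim_row A = n \<Longrightarrow> dim_col A = m \<Longrightarrow> A + 0\<^sub>m n m = (A::'a::monoid_add mat)"
  by (intro eq_matI) auto

lemmas mat_dim_algebra = assoc_mult_mat_dim add_mult_distrib_mat_dim mult_add_distrib_mat_dim
  minus_mult_distrib_mat_dim mult_minus_distrib_mat_dim left_add_zero_mat_dim right_add_zero_mat_dim

lemma eq_minus_of_add_eq_mat:
  assumes "X + Y = Z" "dim_row X = dim_row Y" "dim_col X = dim_col Y"
  shows "Y = Z - (X :: 'a::ab_group_add mat)"
  using assms by (intro eq_matI) auto

lemma eq_of_minus_eq_zero_mat:
  assumes "A - B = 0\<^sub>m r c" and "A \<in> carrier_mat r c" and "B \<in> carrier_mat r c"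
  shows "A = (B :: 'a::ab_group_add mat)"
proof (rule eq_matI)
  fix i j assume ij: "i < dim_row B" "j < dim_col B"
  have "(A - B) $$ (i,j) = 0" unfolding assms(1) using ij assms(3) by simp
  then show "A $$ (i,j) = B $$ (i,j)" using ij assms(2,3) by simp
qed (use assms in auto)

lemma right_inverse_mult_cancel:
  assumes "A * B = 1\<^sub>m n" "dim_col A = dim_row B" "dim_col B = dim_row C" "dim_row C = n"
  shows "A * (B * C) = (C :: 'a::semiring_1 mat)"
  using assms assoc_mult_mat_dim[of A B C] by simp

text \<open>Identities behind the Sherman--Morrison--Woodbury formula for the rank-K update G + B C,
  with W in the role of G^-1 and 1 + C W B the capacitance matrix.\<close>

lemma left_inverse_add_one_cancel:
  fixes Mi C W B :: "'a::comm_ring_1 mat"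
  assumes "Mi \<in> carrier_mat K K" "C \<in> carrier_mat K D" "W \<in> carrier_mat D D" "B \<in> carrier_mat D K"
    and hM: "Mi * (1\<^sub>m K + C * W * B) = 1\<^sub>m K" and "dim_row Z = K"
  shows "Mi * (C * (W * (B * Z))) = Z - Mi * Z"
proof -
  have "Mi * (1\<^sub>m K + C * W * B) * Z = Z" using hM assms by simp
  hence "Mi * Z + Mi * (C * (W * (B * Z))) = Z" using assms by (simp add: mat_dim_algebra)
  thus ?thesis by (rule eq_minus_of_add_eq_mat) (use assms in simp_all)
qed

lemma right_inverse_add_one_cancel:
  fixes Mi C W B :: "'a::comm_ring_1 mat"
  assumes "Mi \<in> carrier_mat K K" "C \<in> carrier_mat K D" "W \<in> carrier_mat D D" "B \<in> carrier_mat D K"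
    and hM: "(1\<^sub>m K + C * W * B) * Mi = 1\<^sub>m K" and "dim_row Z = K"
  shows "C * (W * (B * (Mi * Z))) = Z - Mi * Z"
proof -
  have "(1\<^sub>m K + C * W * B) * Mi * Z = Z" using hM assms by simp
  hence "Mi * Z + C * (W * (B * (Mi * Z))) = Z" using assms by (simp add: mat_dim_algebra)
  thus ?thesis by (rule eq_minus_of_add_eq_mat) (use assms in simp_all)
qed

lemma woodbury_right_inverse:
  fixes G B C W Gi :: "'a::comm_ring_1 mat"
  assumes c: "G \<in> carrier_mat D D" "B \<in> carrier_mat D K" "C \<in> carrier_mat K D"
    "W \<in> carrier_mat D D" "Gi \<in> carrier_mat D D"
    and hW: "W * G = 1\<^sub>m D" and hG: "(G + B * C) * Gi = 1\<^sub>m D"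
  shows "(1\<^sub>m K + C * W * B) * (1\<^sub>m K - C * Gi * B) = 1\<^sub>m K"
proof -
  have hW': "W * (G * Z) = Z" if "dim_row Z = D" for Z
  proof -
    have "W * G * Z = Z" using hW that by simp
    thus ?thesis using c that by (simp add: mat_dim_algebra)
  qed
  have hG': "B * (C * (Gi * Z)) = Z - G * (Gi * Z)" if "dim_row Z = D" for Z
  proof -
    have "(G + B * C) * Gi * Z = Z" using hG that by simp
    hence "G * (Gi * Z) + B * (C * (Gi * Z)) = Z" using c that by (simp add: mat_dim_algebra)
    thus ?thesis by (rule eq_minus_of_add_eq_mat) (use c that in simp_all)
  qed
  show ?thesis
    using c hW' hG' by (simp add: mat_dim_algebra) (rule eq_matI; simp del: index_mult_mat(1))
qed

lemma woodbury_row_orth: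
  fixes R1 R2 G B C W Mi :: "'a::comm_ring_1 mat"
  assumes c: "R1 \<in> carrier_mat p D" "R2 \<in> carrier_mat p' D" "G \<in> carrier_mat D D" "B \<in> carrier_mat D K"
    "C \<in> carrier_mat K D" "W \<in> carrier_mat D D" "Mi \<in> carrier_mat K K"
    and h1: "R1 * (G * transpose_mat R2) = 0\<^sub>m p p'"
    and h2: "W * (G * transpose_mat R2) = transpose_mat R2"
    and hM: "Mi * (1\<^sub>m K + C * W * B) = 1\<^sub>m K"
  shows "(R1 - R1 * B * Mi * (C * W)) * (G + B * C) * transpose_mat R2 = 0\<^sub>m p p'"
  using c h1 h2 left_inverse_add_one_cancel[OF c(7,5,6,4) hM]
  by (simp add: mat_dim_algebra) (rule eq_matI; simp del: index_mult_mat(1))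

lemma woodbury_col_orth:
  fixes R1 R2 G B C W Mi :: "'a::comm_ring_1 mat"
  assumes c: "R1 \<in> carrier_mat p D" "R2 \<in> carrier_mat p' D" "G \<in> carrier_mat D D" "B \<in> carrier_mat D K"
    "C \<in> carrier_mat K D" "W \<in> carrier_mat D D" "Mi \<in> carrier_mat K K"
    and g1: "R1 * (G * transpose_mat R2) = 0\<^sub>m p p'"
    and g2: "R1 * (G * W) = R1"
    and hM: "(1\<^sub>m K + C * W * B) * Mi = 1\<^sub>m K"
  shows "R1 * (G + B * C) * (transpose_mat R2 - W * B * Mi * (C * transpose_mat R2)) = 0\<^sub>m p p'"
proof -
  have g2': "R1 * (G * (W * Z)) = R1 * Z" if "dim_row Z = D" for Z
  proof -
    have "R1 * (G * W) * Z = R1 * Z" using g2 by simp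
    thus ?thesis using c that by (simp add: mat_dim_algebra)
  qed
  show ?thesis
    using c g1 g2' right_inverse_add_one_cancel[OF c(7,5,6,4) hM]
    by (simp add: mat_dim_algebra) (rule eq_matI; simp del: index_mult_mat(1))
qed

lemma woodbury_row_col:
  fixes R1 R2 G B C W Mi Hn :: "'a::comm_ring_1 mat"
  assumes c: "R1 \<in> carrier_mat p D" "R2 \<in> carrier_mat p D" "G \<in> carrier_mat D D" "B \<in> carrier_mat D K"
    "C \<in> carrier_mat K D" "W \<in> carrier_mat D D" "Mi \<in> carrier_mat K K" "Hn \<in> carrier_mat p p"
    and h1: "R1 * (G * transpose_mat R2) = Hn"
    and h2: "W * (G * transpose_mat R2) = 0\<^sub>m D p"
    and hM: "Mi * (1\<^sub>m K + C * W * B) = 1\<^sub>m K"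
    and QW: "(R1 - R1 * B * Mi * (C * W)) * (G + B * C) * W = 0\<^sub>m p D"
  shows "(R1 - R1 * B * Mi * (C * W)) * (G + B * C)
      * (transpose_mat R2 - W * B * Mi * (C * transpose_mat R2))
     = Hn + R1 * B * Mi * (C * transpose_mat R2)"
proof -
  define Y where "Y = (R1 - R1 * B * Mi * (C * W)) * (G + B * C)"
  have Yc: "dim_row Y = p" "dim_col Y = D" using c by (simp_all add: Y_def carrier_matD)
  have "Y * (transpose_mat R2 - W * B * Mi * (C * transpose_mat R2))
      = Y * transpose_mat R2 - (Y * W) * (B * (Mi * (C * transpose_mat R2)))"
    using c Yc by (simp add: mat_dim_algebra)
  also have "Y * W = 0\<^sub>m p D" using QW by (simp add: Y_def)
  also have "Y * transpose_mat R2 = Hn + R1 * B * Mi * (C * transpose_mat R2) + 0\<^sub>m p p"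
    unfolding Y_def using c h1 h2 left_inverse_add_one_cancel[OF c(7,5,6,4) hM]
    by (simp add: mat_dim_algebra) (rule eq_matI; simp del: index_mult_mat(1))
  finally show ?thesis
    using c unfolding Y_def[symmetric] by (intro eq_matI) (simp_all del: index_mult_mat(1))
qed

section \<open>Block rows and the Gauss factorization\<close>

lemma sum_lessThan_mult_blocks: "(\<Sum>r<n*p. f r) = (\<Sum>a<n. \<Sum>s<p. f (a*p+s :: nat))"
proof (induction n)
  case (Suc n)
  have "(\<Sum>r<Suc n*p. f r) = (\<Sum>r<n*p. f r) + (\<Sum>r=n*p..<n*p+p. f r)"
    by (simp add: sum.atLeastLessThan_concat[symmetric] lessThan_atLeast0 add.commute)
  also have "(\<Sum>r=n*p..<n*p+p. f r) = (\<Sum>s<p. f (n*p+s))"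
    by (simp add: sum.shift_bounds_nat_ivl[symmetric] lessThan_atLeast0 add.commute)
  finally show ?case using Suc by simp
qed simp

lemma sum_atMost_blocks: "(\<Sum>r<p + N*p. f r) = (\<Sum>a\<le>N. \<Sum>s<p. f (a*p+s :: nat))"
  using sum_lessThan_mult_blocks[of f "N+1" p] by (simp add: lessThan_Suc_atMost)

lemma block_index_less: "l < p \<Longrightarrow> a \<le> N \<Longrightarrow> a * p + l < (N+1)*(p::nat)"
proof -
  assume l: "l < p" and a: "a \<le> N"
  have "a * p + l < (a+1)*p" using l by simp
  also have "\<dots> \<le> (N+1)*p" using a by (intro mult_right_mono) auto
  finally show ?thesis .
qed

lemma block_index_less': "l < p \<Longrightarrow> a < M \<Longrightarrow> a * p + l < M*(p::nat)"
  using block_index_less[of l p a "M-1"] by (cases M) auto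

lemma block_index_less_add [simp]: "l < p \<Longrightarrow> a \<le> N \<Longrightarrow> a * p + l < p + N*(p::nat)"
  using block_index_less[of l p a N] by simp

lemma div_le_of_less_block: "r < (N+1)*p \<Longrightarrow> r div p \<le> (N::nat)"
  by (metis add.commute less_Suc_eq_le less_mult_imp_div_less plus_1_eq_Suc)

lemma block_lower_unitri_carrier: "block_lower_unitri p S \<Longrightarrow> S k a \<in> carrier_mat p p"
  unfolding block_lower_unitri_def by auto

lemma block_lower_unitri_upper_zero:
  "block_lower_unitri p S \<Longrightarrow> k < a \<Longrightarrow> i < p \<Longrightarrow> j < p \<Longrightarrow> S k a $$ (i,j) = 0"
  unfolding block_lower_unitri_def by auto

lemma block_lower_unitri_diag:
  "block_lower_unitri p S \<Longrightarrow> i < p \<Longrightarrow> j < p \<Longrightarrow> S k k $$ (i,j) = (if i = j then 1 else 0)"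
  unfolding block_lower_unitri_def by (auto simp: one_mat_def)

text \<open>Coefficient row of the k-th biorthogonal polynomial, padded to degree N.\<close>

definition block_row :: "nat \<Rightarrow> nat \<Rightarrow> (nat \<Rightarrow> nat \<Rightarrow> complex mat) \<Rightarrow> nat \<Rightarrow> complex mat" where
  "block_row p N S k = mat p ((N+1)*p) (\<lambda>(i,r). (S k (r div p)) $$ (i, r mod p))"

lemma block_row_carrier [simp]: "block_row p N S k \<in> carrier_mat p ((N+1)*p)"
  by (simp add: block_row_def)

lemma block_row_dim [simp]: "dim_row (block_row p N S k) = p" "dim_col (block_row p N S k) = (N+1)*p"
  by (simp_all add: block_row_def)

lemma index_block_row:
  "i < p \<Longrightarrow> r < (N+1)*p \<Longrightarrow> block_row p N S k $$ (i,r) = (S k (r div p)) $$ (i, r mod p)"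
  by (simp add: block_row_def)

lemma gram_trunc_carrier [simp]: "gram_trunc p G N \<in> carrier_mat ((N+1)*p) ((N+1)*p)"
  by (simp add: gram_trunc_def)

lemma gram_trunc_dim [simp]:
  "dim_row (gram_trunc p G N) = (N+1)*p" "dim_col (gram_trunc p G N) = (N+1)*p"
  by (simp_all add: gram_trunc_def)

lemma block_row_gram_block_row:
  assumes gf: "gauss_factorization p G S1 H S2" and G: "\<forall>a b. G a b \<in> carrier_mat p p"
    and p: "p > 0" and k: "k \<le> N" and l: "l \<le> N"
  shows "block_row p N S1 k * gram_trunc p G N * transpose_mat (block_row p N S2 l)
       = (if k = l then H k else 0\<^sub>m p p)"
proof -
  have b1: "block_lower_unitri p S1" and b2: "block_lower_unitri p S2"
    and Hc: "\<forall>n. H n \<in> carrier_mat p p"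
    and eq: "\<And>n m. mat p p (\<lambda>(i,j). \<Sum>a\<le>n. \<Sum>b\<le>m. (S1 n a * G a b * transpose_mat (S2 m b)) $$ (i,j))
              = (if n = m then H n else 0\<^sub>m p p)"
    using gf unfolding gauss_factorization_def by auto
  let ?D = "(N+1)*p"
  show ?thesis
  proof (rule eq_matI)
    fix i j assume "i < dim_row (if k = l then H k else 0\<^sub>m p p)"
        "j < dim_col (if k = l then H k else 0\<^sub>m p p)"
    then have i: "i < p" and j: "j < p" using Hc by (auto split: if_splits)
    define f where "f a b t = (\<Sum>s<p. (S1 k a) $$ (i,s) * (G a b) $$ (s,t))
        * (S2 l b) $$ (j,t)" for a b t
    have entry: "(S1 k a * G a b * transpose_mat (S2 l b)) $$ (i,j) = (\<Sum>t<p. f a b t)" for a b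
      using block_lower_unitri_carrier[OF b2, of l b] i j block_lower_unitri_carrier[OF b1] G
      by (subst index_mult_mat3_sum[of _ p p _ p _ p]) (auto simp: f_def intro!: sum.cong)
    have "(block_row p N S1 k * gram_trunc p G N * transpose_mat (block_row p N S2 l)) $$ (i,j)
       = (\<Sum>t<?D. (\<Sum>s<?D. block_row p N S1 k $$ (i,s) * gram_trunc p G N $$ (s,t))
           * block_row p N S2 l $$ (j,t))"
      by (subst index_mult_mat3_sum[of _ p ?D _ ?D _ p]) (use i j in auto)
    also have "\<dots> = (\<Sum>b\<le>N. \<Sum>t<p. \<Sum>a\<le>N. f a b t)"
      using i j p by (simp add: sum_atMost_blocks index_block_row gram_trunc_def sum_distrib_right
          f_def)
    also have "\<dots> = (\<Sum>b\<le>l. \<Sum>t<p. \<Sum>a\<le>k. f a b t)"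
    proof -
      have "(\<Sum>a\<le>N. f a b t) = (\<Sum>a\<le>k. f a b t)" for b t
        by (rule sum.mono_neutral_right)
           (use k i in \<open>auto intro!: sum.neutral simp: f_def block_lower_unitri_upper_zero[OF b1]\<close>)
      moreover have "(\<Sum>b\<le>N. \<Sum>t<p. \<Sum>a\<le>k. f a b t) = (\<Sum>b\<le>l. \<Sum>t<p. \<Sum>a\<le>k. f a b t)"
        by (rule sum.mono_neutral_right)
           (use l j in \<open>auto intro!: sum.neutral simp: f_def block_lower_unitri_upper_zero[OF b2]\<close>)
      ultimately show ?thesis by simp
    qed
    also have "\<dots> = (\<Sum>a\<le>k. \<Sum>b\<le>l. (S1 k a * G a b * transpose_mat (S2 l b)) $$ (i,j))"
      unfolding entry by (subst sum.swap) (simp add: sum.swap[of _ "{..<p}"])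
    also have "\<dots> = (if k = l then H k else 0\<^sub>m p p) $$ (i,j)"
      using arg_cong[OF eq[of k l], of "\<lambda>M. M $$ (i,j)"] i j by simp
    finally show "(block_row p N S1 k * gram_trunc p G N * transpose_mat (block_row p N S2 l)) $$ (i,j)
       = (if k = l then H k else 0\<^sub>m p p) $$ (i,j)" .
  qed (use Hc in auto)
qed

lemma block_row_gram_block_row':
  assumes "gauss_factorization p G S1 H S2" "\<forall>a b. G a b \<in> carrier_mat p p" "p > 0" "k \<le> N" "l \<le> N"
  shows "block_row p N S1 k * (gram_trunc p G N * transpose_mat (block_row p N S2 l))
       = (if k = l then H k else 0\<^sub>m p p)"
  using block_row_gram_block_row[OF assms] by (simp add: assoc_mult_mat_dim)

definition block_trunc :: "nat \<Rightarrow> nat \<Rightarrow> (nat \<Rightarrow> nat \<Rightarrow> complex mat) \<Rightarrow> complex mat" where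
  "block_trunc p N S = mat ((N+1)*p) ((N+1)*p) (\<lambda>(r,e). (S (r div p) (e div p)) $$ (r mod p, e mod p))"

definition block_diag :: "nat \<Rightarrow> nat \<Rightarrow> (nat \<Rightarrow> complex mat) \<Rightarrow> complex mat" where
  "block_diag p N H = mat ((N+1)*p) ((N+1)*p)
     (\<lambda>(r,e). if r div p = e div p then H (r div p) $$ (r mod p, e mod p) else 0)"

lemma block_trunc_carrier [simp]: "block_trunc p N S \<in> carrier_mat ((N+1)*p) ((N+1)*p)"
  by (simp add: block_trunc_def)

lemma block_trunc_dim [simp]:
  "dim_row (block_trunc p N S) = (N+1)*p" "dim_col (block_trunc p N S) = (N+1)*p"
  by (simp_all add: block_trunc_def)

lemma det_block_trunc:
  assumes b: "block_lower_unitri p S" and p: "p > 0"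
  shows "det (block_trunc p N S) = 1"
proof -
  have "block_trunc p N S $$ (i,j) = 0" if "i < j" "j < (N+1)*p" for i j
  proof (cases "i div p < j div p")
    case True thus ?thesis using that p
        by (simp add: block_trunc_def block_lower_unitri_upper_zero[OF b])
  next
    case False
    hence "i div p = j div p" using that div_le_mono[of i j p] by linarith
    moreover have "i mod p \<noteq> j mod p" using that \<open>i div p = j div p\<close>
      by (metis div_mult_mod_eq nat_neq_iff)
    ultimately show ?thesis using that p by (simp add: block_trunc_def block_lower_unitri_diag[OF b])
  qed
  then have "det (block_trunc p N S) = prod_list (diag_mat (block_trunc p N S))"
    by (intro det_lower_triangular[OF _ block_trunc_carrier]) auto
  also have "\<dots> = 1"
  proof -
    have "\<forall>x \<in> set (diag_mat (block_trunc p N S)). x = 1"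
      using p by (auto simp: diag_mat_def block_trunc_def block_lower_unitri_diag[OF b])
    moreover have "\<forall>x\<in>set xs. x = 1 \<Longrightarrow> prod_list xs = (1::complex)" for xs by (induction xs) auto
    ultimately show ?thesis by blast
  qed
  finally show ?thesis .
qed

lemma block_trunc_gram_block_trunc:
  assumes gf: "gauss_factorization p G S1 H S2" and G: "\<forall>a b. G a b \<in> carrier_mat p p" and p: "p > 0"
  shows "block_trunc p N S1 * gram_trunc p G N * transpose_mat (block_trunc p N S2) = block_diag p N H"
proof (rule eq_matI)
  fix r e assume "r < dim_row (block_diag p N H)" "e < dim_col (block_diag p N H)"
  hence r: "r < (N+1)*p" and e: "e < (N+1)*p" by (auto simp: block_diag_def)
  have rm: "r mod p < p" "e mod p < p" using p by auto
  have "(block_trunc p N S1 * gram_trunc p G N * transpose_mat (block_trunc p N S2)) $$ (r,e)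
     = (\<Sum>t<(N+1)*p. (\<Sum>s<(N+1)*p. block_trunc p N S1 $$ (r,s) * gram_trunc p G N $$ (s,t))
         * block_trunc p N S2 $$ (e,t))"
    by (subst index_mult_mat3_sum[of _ "(N+1)*p"
        "(N+1)*p" _ "(N+1)*p" _ "(N+1)*p"]) (use r e in \<open>auto intro!: sum.cong\<close>)
  also have "\<dots> = (\<Sum>t<(N+1)*p. (\<Sum>s<(N+1)*p. block_row p N S1 (r div p) $$ (r mod p,s)
      * gram_trunc p G N $$ (s,t))
      * block_row p N S2 (e div p) $$ (e mod p,t))"
    using r e rm by (intro sum.cong refl) (simp add: block_trunc_def index_block_row)
  also have "\<dots> = (block_row p N S1 (r div p) * gram_trunc p G N
      * transpose_mat (block_row p N S2 (e div p))) $$ (r mod p, e mod p)"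
    by (subst index_mult_mat3_sum[of _ p "(N+1)*p" _ "(N+1)*p" _ p]) (use rm in \<open>auto intro!: sum.cong\<close>)
  also have "\<dots> = block_diag p N H $$ (r,e)"
    using r e rm by (simp add: block_row_gram_block_row[OF gf G p div_le_of_less_block[OF r]
        div_le_of_less_block[OF e]] block_diag_def)
  finally show "(block_trunc p N S1 * gram_trunc p G N * transpose_mat (block_trunc p N S2)) $$ (r,e)
      = block_diag p N H $$ (r,e)" .
qed (auto simp: block_diag_def)

text \<open>A kernel vector of the last diagonal block extends by zero to a kernel vector of the whole
  block diagonal matrix.\<close>

lemma det_block_diag_eq_zero:
  assumes Hc: "H k \<in> carrier_mat p p" and dk: "det (H k) = 0" and p: "p > 0"
  shows "det (block_diag p k H) = 0"
proof -
  let ?D = "(k+1)*p"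
  have Hbc: "block_diag p k H \<in> carrier_mat ?D ?D" by (simp add: block_diag_def)
  obtain v where v: "v \<in> carrier_vec p" "v \<noteq> 0\<^sub>v p" "H k *\<^sub>v v = 0\<^sub>v p"
    using dk det_0_iff_vec_prod_zero[OF Hc] by auto
  define V where "V = vec ?D (\<lambda>r. if r div p = k then v $ (r mod p) else 0)"
  have Vc: "V \<in> carrier_vec ?D" by (simp add: V_def)
  obtain s where s: "s < p" "v $ s \<noteq> 0" using v(1,2) by (metis carrier_vecD eq_vecI index_zero_vec(1,2))
  have ks: "k*p + s < ?D" using block_index_less[OF s(1), of k k] by simp
  have "V \<noteq> 0\<^sub>v ?D"
  proof
    assume "V = 0\<^sub>v ?D"
    hence "V $ (k*p+s) = 0" using ks by simp
    thus False using s ks by (simp add: V_def)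
  qed
  moreover have "block_diag p k H *\<^sub>v V = 0\<^sub>v ?D"
  proof (rule eq_vecI)
    fix r assume "r < dim_vec (0\<^sub>v ?D)"
    hence r: "r < ?D" by simp
    have rm: "r mod p < p" using p by simp
    have "(block_diag p k H *\<^sub>v V) $ r = (\<Sum>e<?D. block_diag p k H $$ (r,e) * V $ e)"
      using r Hbc Vc by (simp add: scalar_prod_def atLeast0LessThan)
    also have "\<dots> = (\<Sum>b\<le>k. \<Sum>t<p. block_diag p k H $$ (r,b*p+t) * V $ (b*p+t))"
      by (simp add: sum_atMost_blocks)
    also have "\<dots> = (\<Sum>t<p. block_diag p k H $$ (r,k*p+t) * V $ (k*p+t))"
      by (subst sum.remove[of _ k]) (use block_index_less in \<open>auto simp: V_def intro!: sum.neutral\<close>)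
    also have "\<dots> = (if r div p = k then (\<Sum>t<p. H k $$ (r mod p, t) * v $ t) else 0)"
      using r block_index_less[of _ p k k] by (auto simp: block_diag_def V_def intro!: sum.cong)
    also have "(\<Sum>t<p. H k $$ (r mod p, t) * v $ t) = (H k *\<^sub>v v) $ (r mod p)"
      using Hc v(1) rm by (simp add: scalar_prod_def atLeast0LessThan)
    finally show "(block_diag p k H *\<^sub>v V) $ r = 0\<^sub>v ?D $ r" using r v(3) rm by simp
  qed (simp add: block_diag_def)
  ultimately show ?thesis using det_0_iff_vec_prod_zero[OF Hbc] Vc by auto
qed

lemma det_H_nonzero:
  assumes gf: "gauss_factorization p G S1 H S2" and G: "\<forall>a b. G a b \<in> carrier_mat p p" and p: "p > 0"
    and qd: "quasidefinite p G"
  shows "det (H k) \<noteq> 0"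
proof
  assume dk: "det (H k) = 0"
  have b1: "block_lower_unitri p S1" and b2: "block_lower_unitri p S2" and Hc: "H k \<in> carrier_mat p p"
    using gf unfolding gauss_factorization_def by auto
  have c1: "block_trunc p k S1 * gram_trunc p G k \<in> carrier_mat ((k+1)*p) ((k+1)*p)" by auto
  have "det (block_diag p k H)
      = det (block_trunc p k S1 * gram_trunc p G k) * det (transpose_mat (block_trunc p k S2))"
    unfolding block_trunc_gram_block_trunc[OF gf G p, symmetric]
        by (rule det_mult[OF c1]) (use block_trunc_carrier[of p k S2] in simp)
  also have "\<dots> = det (block_trunc p k S1) * det (gram_trunc p G k) * det (block_trunc p k S2)"
    by (simp add: det_mult[OF block_trunc_carrier gram_trunc_carrier] det_transpose[OF
        block_trunc_carrier])
  also have "\<dots> \<noteq> 0" using qd det_block_trunc[OF b1 p] det_block_trunc[OF b2 p]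
      unfolding quasidefinite_def by simp
  finally show False using det_block_diag_eq_zero[of H k, OF Hc dk p] by simp
qed

lemma gauss_factorization_transpose:
  assumes gf: "gauss_factorization p G S1 H S2" and G: "\<forall>a b. G a b \<in> carrier_mat p p"
  shows "gauss_factorization p (\<lambda>a b. transpose_mat (G b a)) S2 (\<lambda>n. transpose_mat (H n)) S1"
proof -
  have b1: "block_lower_unitri p S1" and b2: "block_lower_unitri p S2"
    and Hc: "\<forall>n. H n \<in> carrier_mat p p"
    and eq: "\<And>n m. mat p p (\<lambda>(i,j). \<Sum>a\<le>n. \<Sum>b\<le>m. (S1 n a * G a b * transpose_mat (S2 m b)) $$ (i,j))
              = (if n = m then H n else 0\<^sub>m p p)"
    using gf unfolding gauss_factorization_def by auto
  have entry: "(S2 n a * transpose_mat (G b a) * transpose_mat (S1 m b)) $$ (i,j)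
      = (S1 m b * G b a * transpose_mat (S2 n a)) $$ (j,i)" if "i < p" "j < p" for n m a b i j
  proof -
    have "S2 n a * transpose_mat (G b a) * transpose_mat (S1 m b)
        = transpose_mat (S1 m b * G b a * transpose_mat (S2 n a))"
      using G block_lower_unitri_carrier[OF b1] block_lower_unitri_carrier[OF b2]
      by (subst transpose_mult3[of _ p p _ p _ p]) auto
    thus ?thesis
      using that G block_lower_unitri_carrier[OF b1, of m b] block_lower_unitri_carrier[OF b2, of n a]
      by (simp add: carrier_matD)
  qed
  have "mat p p (\<lambda>(i,j). \<Sum>a\<le>n. \<Sum>b\<le>m. (S2 n a * transpose_mat (G b a) * transpose_mat (S1 m b)) $$ (i,j))
      = (if n = m then transpose_mat (H n) else 0\<^sub>m p p)" for n m
  proof (rule eq_matI)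
    fix i j assume "i < dim_row (if n = m then transpose_mat (H n) else 0\<^sub>m p p)"
      "j < dim_col (if n = m then transpose_mat (H n) else 0\<^sub>m p p)"
    then have ij: "i < p" "j < p" using Hc by (auto split: if_splits)
    have "(\<Sum>a\<le>n. \<Sum>b\<le>m. (S2 n a * transpose_mat (G b a) * transpose_mat (S1 m b)) $$ (i,j))
        = (\<Sum>b\<le>m. \<Sum>a\<le>n. (S1 m b * G b a * transpose_mat (S2 n a)) $$ (j,i))"
      using ij by (simp add: entry sum.swap[of _ "{..n}"])
    also have "\<dots> = (if m = n then H m else 0\<^sub>m p p) $$ (j,i)"
      using arg_cong[OF eq[of m n], of "\<lambda>M. M $$ (j,i)"] ij by simp
    finally show "mat p p (\<lambda>(i,j). \<Sum>a\<le>n. \<Sum>b\<le>m. (S2 n a * transpose_mat (G b a)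
        * transpose_mat (S1 m b)) $$ (i,j)) $$ (i,j)
        = (if n = m then transpose_mat (H n) else 0\<^sub>m p p) $$ (i,j)"
      using ij by (auto simp: index_transpose_mat_carrier[OF Hc[rule_format]])
  qed (use Hc in auto)
  then show ?thesis using b1 b2 Hc unfolding gauss_factorization_def by auto
qed

lemma gram_trunc_transpose:
  assumes G: "\<forall>a b. G a b \<in> carrier_mat p p" and p: "p > 0"
  shows "gram_trunc p (\<lambda>a b. transpose_mat (G b a)) N = transpose_mat (gram_trunc p G N)"
  using G p by (intro eq_matI)
      (auto simp: gram_trunc_def index_transpose_mat_carrier[OF G[rule_format]])

lemma quasidefinite_transpose:
  assumes "\<forall>a b. G a b \<in> carrier_mat p p" "p > 0" "quasidefinite p G"
  shows "quasidefinite p (\<lambda>a b. transpose_mat (G b a))"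
  using assms det_transpose[OF gram_trunc_carrier]
  unfolding quasidefinite_def gram_trunc_transpose[OF assms(1,2)] by metis

lemma zero_blocks_of_orth_block_rows:
  assumes Y: "Y \<in> carrier_mat r ((N+1)*p)" and b: "block_lower_unitri p S" and p: "p > 0"
    and LN: "L \<le> N+1" and orth: "\<And>l. l < L \<Longrightarrow> Y * transpose_mat (block_row p N S l) = 0\<^sub>m r p"
  shows "l < L \<Longrightarrow> i < r \<Longrightarrow> t < p \<Longrightarrow> Y $$ (i, l*p+t) = 0"
proof (induction l arbitrary: i t rule: less_induct)
  case (less l)
  have lN: "l \<le> N" using less.prems LN by simp
  have "0 = (Y * transpose_mat (block_row p N S l)) $$ (i,t)" using orth[OF less.prems(1)] less.prems
      by simp
  also have "\<dots> = (\<Sum>a\<le>N. \<Sum>s<p. Y $$ (i,a*p+s) * (S l a) $$ (t,s))"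
    using Y less.prems p
    by (subst index_mult_mat_sum[of _ r "(N+1)*p" _ p]) (auto simp: sum_atMost_blocks index_block_row)
  also have "\<dots> = (\<Sum>s<p. Y $$ (i,l*p+s) * (S l l) $$ (t,s))"
  proof -
    have "(\<Sum>s<p. Y $$ (i,a*p+s) * (S l a) $$ (t,s)) = 0" if a: "a \<in> {..N} - {l}" for a
    proof (cases "a < l")
      case True thus ?thesis using less.IH[OF True] less.prems LN by (auto intro!: sum.neutral)
    next
      case False hence "l < a" using a by auto
      thus ?thesis using block_lower_unitri_upper_zero[OF b] less.prems by (auto intro!: sum.neutral)
    qed
    then show ?thesis by (simp add: sum.remove[OF _ lN[folded atMost_iff]])
  qed
  also have "\<dots> = Y $$ (i, l*p+t)"
    using less.prems by (simp add: block_lower_unitri_diag[OF b] if_distrib cong: if_cong)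
  finally show ?case by simp
qed

text \<open>The first n blocks of Delta G_n are Delta' G_(n-1), where Delta' is Delta without its
  vanishing last block.\<close>

lemma eq_zero_of_gram_zero_blocks:
  assumes p: "p > 0" and n: "n \<ge> 1"
    and qdet: "det (gram_trunc p G (n-1)) \<noteq> 0"
    and D: "\<Delta> \<in> carrier_mat r ((n+1)*p)"
    and last: "\<And>i l. i < r \<Longrightarrow> l < p \<Longrightarrow> \<Delta> $$ (i, n*p+l) = 0"
    and Y0: "\<And>l i t. l < n \<Longrightarrow> i < r \<Longrightarrow> t < p \<Longrightarrow> (\<Delta> * gram_trunc p G n) $$ (i, l*p+t) = 0"
  shows "\<Delta> = 0\<^sub>m r ((n+1)*p)"
proof -
  define D' where "D' = mat r (n*p) (\<lambda>(i,e). \<Delta> $$ (i,e))"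
  have nn: "(n - 1 + 1) * p = n * p" "p + (n - Suc 0) * p = n * p" using n by (cases n; simp)+
  have G': "gram_trunc p G (n-1) \<in> carrier_mat (n*p) (n*p)" using gram_trunc_carrier[of p G "n-1"] nn
      by simp
  have D'c: "D' \<in> carrier_mat r (n*p)" by (simp add: D'_def)
  have "D' * gram_trunc p G (n-1) = 0\<^sub>m r (n*p)"
  proof (rule eq_matI)
    fix i e assume "i < dim_row (0\<^sub>m r (n*p))" "e < dim_col (0\<^sub>m r (n*p))"
    hence i: "i < r" and e: "e < n*p" by auto
    have "(D' * gram_trunc p G (n-1)) $$ (i,e) = (\<Sum>s<n*p. \<Delta> $$ (i,s) * gram_trunc p G n $$ (s,e))"
      by (subst index_mult_mat_sum[OF D'c G' i e])
          (use i e in \<open>auto simp: D'_def gram_trunc_def nn intro!: sum.cong\<close>)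
    also have "\<dots> = (\<Sum>s<(n+1)*p. \<Delta> $$ (i,s) * gram_trunc p G n $$ (s,e))"
    proof -
      have "(\<Sum>s<(n+1)*p. \<Delta> $$ (i,s) * gram_trunc p G n $$ (s,e))
          = (\<Sum>a<n+1. \<Sum>t<p. \<Delta> $$ (i,a*p+t) * gram_trunc p G n $$ (a*p+t,e))"
        by (rule sum_lessThan_mult_blocks)
      also have "\<dots> = (\<Sum>a<n. \<Sum>t<p. \<Delta> $$ (i,a*p+t) * gram_trunc p G n $$ (a*p+t,e))"
        using last i by simp
      also have "\<dots> = (\<Sum>s<n*p. \<Delta> $$ (i,s) * gram_trunc p G n $$ (s,e))"
        by (rule sum_lessThan_mult_blocks[symmetric])
      finally show ?thesis by simp
    qed
    also have "\<dots> = (\<Delta> * gram_trunc p G n) $$ (i, (e div p)*p + e mod p)"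
      using e by (subst index_mult_mat_sum[OF D gram_trunc_carrier i]) simp_all
    also have "\<dots> = 0" using Y0[of "e div p" i "e mod p"] e i p by (simp add: less_mult_imp_div_less)
    finally show "(D' * gram_trunc p G (n-1)) $$ (i,e) = 0\<^sub>m r (n*p) $$ (i,e)" using i e by simp
  qed (use D'c G' in auto)
  moreover obtain Gi where Gi: "Gi \<in> carrier_mat (n*p) (n*p)" "gram_trunc p G (n-1) * Gi = 1\<^sub>m (n*p)"
    using minv_inverse[OF G' qdet] by blast
  ultimately have D'0: "D' = 0\<^sub>m r (n*p)"
    using assoc_mult_mat[OF D'c G' Gi(1)] D'c by simp
  show ?thesis
  proof (rule eq_matI)
    fix i e assume "i < dim_row (0\<^sub>m r ((n+1)*p))" "e < dim_col (0\<^sub>m r ((n+1)*p))"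
    hence i: "i < r" and e: "e < (n+1)*p" by auto
    show "\<Delta> $$ (i,e) = 0\<^sub>m r ((n+1)*p) $$ (i,e)"
    proof (cases "e < n*p")
      case True
      then show ?thesis using arg_cong[OF D'0, of "\<lambda>M. M $$ (i,e)"] i e by (simp add: D'_def)
    next
      case False
      then have "e div p = n"
        using div_le_of_less_block[OF e] div_le_mono[of "n*p" e p] p by simp
      hence "e = n*p + e mod p" by (metis div_mult_mod_eq)
      thus ?thesis using last[OF i, of "e mod p"] i e p by simp
    qed
  qed (use D in auto)
qed

text \<open>Orthogonality to the lower degrees may be tested against the block rows of any block
  lower unitriangular S, not only against those of S2.\<close>

lemma block_row_unique:
  assumes gf: "gauss_factorization p G S1 H S2" and G: "\<forall>a b. G a b \<in> carrier_mat p p"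
    and p: "p > 0" and n: "n \<ge> 1" and qd: "quasidefinite p G"
    and Y: "Y \<in> carrier_mat p ((n+1)*p)"
    and monic: "\<And>i l. i < p \<Longrightarrow> l < p \<Longrightarrow> Y $$ (i, n*p+l) = (if i = l then 1 else 0)"
    and S: "block_lower_unitri p S"
    and orth: "\<And>l. l < n \<Longrightarrow> Y * gram_trunc p G n * transpose_mat (block_row p n S l) = 0\<^sub>m p p"
  shows "Y = block_row p n S1 n"
proof -
  have b1: "block_lower_unitri p S1" and b2: "block_lower_unitri p S2"
    using gf unfolding gauss_factorization_def by auto
  let ?R = "block_row p n S1 n" and ?D = "(n+1)*p"
  have nD: "n*p + l < ?D" if "l < p" for l using block_index_less[OF that, of n n] by simp
  have YG0: "(Y * gram_trunc p G n) $$ (i, l*p+t) = 0" if "l < n" "i < p" "t < p" for l i t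
    by (rule zero_blocks_of_orth_block_rows[OF _ S p _ orth that]) (use Y in auto)
  have RG0: "(?R * gram_trunc p G n) $$ (i, l*p+t) = 0" if "l < n" "i < p" "t < p" for l i t
  proof (rule zero_blocks_of_orth_block_rows[OF _ b2 p _ _ that])
    show "?R * gram_trunc p G n * transpose_mat (block_row p n S2 l') = 0\<^sub>m p p" if "l' < n" for l'
      using block_row_gram_block_row[OF gf G p, of n n l'] that by simp
  qed auto
  have "Y - ?R = 0\<^sub>m p ?D"
  proof (rule eq_zero_of_gram_zero_blocks[OF p n])
    show "det (gram_trunc p G (n - 1)) \<noteq> 0" using qd unfolding quasidefinite_def by blast
    show "(Y - ?R) $$ (i, n*p+l) = 0" if "i < p" "l < p" for i l
      using that nD[OF that(2)] Y monic p by (simp add: index_block_row block_lower_unitri_diag[OF b1])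
    show "((Y - ?R) * gram_trunc p G n) $$ (i, l*p+t) = 0" if "l < n" "i < p" "t < p" for l i t
    proof -
      have "l*p+t < ?D" using block_index_less[OF that(3), of l n] that by simp
      moreover have "(Y - ?R) * gram_trunc p G n = Y * gram_trunc p G n - ?R * gram_trunc p G n"
        using Y by (simp add: minus_mult_distrib_mat_dim carrier_matD)
      ultimately show ?thesis using YG0[OF that] RG0[OF that] that Y by simp
    qed
  qed (use Y in auto)
  thus ?thesis by (rule eq_of_minus_eq_zero_mat[OF _ Y block_row_carrier])
qed

section \<open>Coefficient rows of matrix polynomials\<close>

lemma degree_le_mdeg: "i < dim_row P \<Longrightarrow> j < dim_col P \<Longrightarrow> degree (P $$ (i,j)) \<le> mdeg P"
proof -
  assume ij: "i < dim_row P" "j < dim_col P"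
  have fin: "finite {degree (P $$ (i,j)) | i j. i < dim_row P \<and> j < dim_col P}"
  proof -
    have "{degree (P $$ (i,j)) | i j. i < dim_row P \<and> j < dim_col P}
        = (\<lambda>(i,j). degree (P $$ (i,j))) ` ({..<dim_row P} \<times> {..<dim_col P})" by auto
    thus ?thesis by simp
  qed
  show ?thesis unfolding mdeg_def
    by (rule Max_ge) (use fin ij in auto)
qed

lemma sum_coeff_degree_cong:
  assumes "degree f \<le> d1" "degree f \<le> d2"
  shows "(\<Sum>r\<le>d1. coeff f r * g r) = (\<Sum>r\<le>d2. coeff f r * (g r :: complex))"
proof -
  have "(\<Sum>r\<le>d1. coeff f r * g r) = (\<Sum>r\<le>max d1 d2. coeff f r * g r)"
    by (rule sum.mono_neutral_left) (use assms in \<open>auto simp: coeff_eq_0\<close>)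
  also have "\<dots> = (\<Sum>r\<le>d2. coeff f r * g r)"
    by (rule sum.mono_neutral_right) (use assms in \<open>auto simp: coeff_eq_0\<close>)
  finally show ?thesis .
qed

lemma sum_delta_mult: "finite A \<Longrightarrow> (\<Sum>r\<in>A. (if a = r then 1 else 0) * f r)
    = (if a \<in> A then f a else (0::complex))"
  by (induction A rule: finite_induct) auto

lemma index_monomI: "i < p \<Longrightarrow> j < p \<Longrightarrow> monomI p a $$ (i,j) = (if i = j then monom 1 a else 0)"
  by (simp add: monomI_def)

lemma index_pairR_monomI:
  assumes "i < p" "l < p"
  shows "pairR p (monomI p a) B $$ (i,l) = (B a) $$ (i,l)"
proof -
  have dm: "degree (monomI p a $$ (i,i)) \<le> mdeg (monomI p a)"
    by (rule degree_le_mdeg) (use assms in \<open>auto simp: monomI_def\<close>)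
  have "pairR p (monomI p a) B $$ (i,l)
      = (\<Sum>k<p. \<Sum>r\<le>mdeg (monomI p a). coeff (monomI p a $$ (i,k)) r * (B r) $$ (k,l))"
    using assms by (simp add: pairR_def)
  also have "\<dots> = (\<Sum>r\<le>mdeg (monomI p a). coeff (monomI p a $$ (i,i)) r * (B r) $$ (i,l))"
    by (subst sum.remove[of _ i]) (use assms in \<open>auto simp: index_monomI intro!: sum.neutral\<close>)
  also have "\<dots> = (B a) $$ (i,l)"
    using dm assms by (simp add: index_monomI coeff_monom sum_delta_mult degree_monom_eq)
  finally show ?thesis .
qed

text \<open>Block (a, b) of the Gram matrix of v is the sum over (j, m) of <x^a, beta_jm> times
  (d/dy)^m y^b at x_j divided by m!, so each of its truncations factors as B L^T.\<close>

definition beta_moments :: "nat \<Rightarrow> nat \<Rightarrow> (nat \<Rightarrow> nat) \<Rightarrow>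
    (nat \<Rightarrow> nat \<Rightarrow> nat \<Rightarrow> complex mat) \<Rightarrow> nat \<Rightarrow> complex mat" where
  "beta_moments p q \<kappa> \<beta> N = mat ((N+1)*p) (NN q \<kappa> * p) (\<lambda>(r,c). case bidx q \<kappa> ! (c div p) of (j,m) \<Rightarrow>
       (\<beta> j m (r div p)) $$ (r mod p, c mod p))"

definition monomial_jets :: "nat \<Rightarrow> nat \<Rightarrow> (nat \<Rightarrow> real) \<Rightarrow> (nat \<Rightarrow> nat) \<Rightarrow> nat \<Rightarrow> complex mat" where
  "monomial_jets p q xs \<kappa> N = mat ((N+1)*p) (NN q \<kappa> * p) (\<lambda>(r,c).
     case bidx q \<kappa> ! (c div p) of (j,m) \<Rightarrow>
       if r mod p = c mod p
       then poly ((pderiv ^^ m) (monom 1 (r div p))) (of_real (xs j)) / of_nat (fact m) else 0)"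

lemma beta_moments_carrier[simp]: "beta_moments p q \<kappa> \<beta> N \<in> carrier_mat ((N+1)*p) (NN q \<kappa> * p)"
  by (simp add: beta_moments_def)

lemma monomial_jets_carrier[simp]: "monomial_jets p q xs \<kappa> N \<in> carrier_mat ((N+1)*p) (NN q \<kappa> * p)"
  by (simp add: monomial_jets_def)

lemma beta_moments_dim[simp]: "dim_row (beta_moments p q \<kappa> \<beta> N) = (N+1)*p"
    "dim_col (beta_moments p q \<kappa> \<beta> N) = NN q \<kappa> * p"
  by (simp_all add: beta_moments_def)

lemma monomial_jets_dim[simp]: "dim_row (monomial_jets p q xs \<kappa> N) = (N+1)*p"
    "dim_col (monomial_jets p q xs \<kappa> N) = NN q \<kappa> * p"
  by (simp_all add: monomial_jets_def)

lemma index_vform_monomI: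
  assumes "k < p" "l < p"
  shows "vform p q xs \<kappa> \<beta> (monomI p a) (monomI p b) $$ (k,l)
    = (\<Sum>t<NN q \<kappa>. case bidx q \<kappa> ! t of (j,m) \<Rightarrow>
          (\<beta> j m a) $$ (k,l) * (poly ((pderiv ^^ m) (monom 1 b)) (of_real (xs j)) / of_nat (fact m)))"
proof -
  have *: "(pairR p (monomI p a) (\<beta> j m)
      * transpose_mat (meval (mderiv m (monomI p b)) (of_real (xs j)))) $$ (k,l)
      = (\<beta> j m a) $$ (k,l) * poly ((pderiv ^^ m) (monom 1 b)) (of_real (xs j))" for j m
  proof -
    have "(pairR p (monomI p a) (\<beta> j m)
        * transpose_mat (meval (mderiv m (monomI p b)) (of_real (xs j)))) $$ (k,l)
      = (\<Sum>s<p. pairR p (monomI p a) (\<beta> j m) $$ (k,s) * (if s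
          = l then poly ((pderiv ^^ m) (monom 1 b)) (of_real (xs j)) else 0))"
      by (subst index_mult_mat_sum[of _ p p _ p])
          (use assms in \<open>auto simp: pairR_def meval_def mderiv_def monomI_def intro!: sum.cong\<close>)
    also have "\<dots> = pairR p (monomI p a) (\<beta> j m) $$ (k,l)
        * poly ((pderiv ^^ m) (monom 1 b)) (of_real (xs j))"
      using assms by (simp add: if_distrib cong: if_cong)
    finally show ?thesis using index_pairR_monomI assms by simp
  qed
  show ?thesis
    unfolding vform_def using assms
    by (simp add: sum_list_sum_nth atLeast0LessThan NN_def)
      (intro sum.cong; simp add: * split: prod.split)
qed

lemma uhat_carrier:
  assumes "\<forall>a b. u a b \<in> carrier_mat p p"
  shows "\<forall>a b. uhat p q xs \<kappa> \<beta> u a b \<in> carrier_mat p p"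
  using assms by (auto simp: uhat_def vform_def)

lemma gram_trunc_uhat:
  assumes p: "p > 0" and u_dim: "\<forall>a b. u a b \<in> carrier_mat p p"
  shows "gram_trunc p (uhat p q xs \<kappa> \<beta> u) N
      = gram_trunc p u N + beta_moments p q \<kappa> \<beta> N * transpose_mat (monomial_jets p q xs \<kappa> N)"
proof (rule eq_matI)
  fix r s assume "r < dim_row (gram_trunc p u N + beta_moments p q \<kappa> \<beta> N
      * transpose_mat (monomial_jets p q xs \<kappa> N))"
    "s < dim_col (gram_trunc p u N + beta_moments p q \<kappa> \<beta> N * transpose_mat (monomial_jets p q xs \<kappa> N))"
  hence r: "r < (N+1)*p" and s: "s < (N+1)*p" by auto
  have km: "r mod p < p" "s mod p < p" using p by auto
  have "(beta_moments p q \<kappa> \<beta> N * transpose_mat (monomial_jets p q xs \<kappa> N)) $$ (r,s)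
     = (\<Sum>c<NN q \<kappa> * p. beta_moments p q \<kappa> \<beta> N $$ (r,c) * monomial_jets p q xs \<kappa> N $$ (s,c))"
    by (subst index_mult_mat_sum[of _ "(N+1)*p" "NN q \<kappa> * p" _ "(N+1)*p"]) (use r s in auto)
  also have "\<dots> = (\<Sum>t<NN q \<kappa>. \<Sum>l'<p. beta_moments p q \<kappa> \<beta> N $$ (r,t*p+l')
      * monomial_jets p q xs \<kappa> N $$ (s,t*p+l'))"
    by (rule sum_lessThan_mult_blocks)
  also have "\<dots> = (\<Sum>t<NN q \<kappa>. case bidx q \<kappa> ! t of (j,m) \<Rightarrow>
          (\<beta> j m (r div p)) $$ (r mod p, s mod p)
              * (poly ((pderiv ^^ m) (monom 1 (s div p))) (of_real (xs j)) / of_nat (fact m)))"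
  proof (rule sum.cong[OF refl])
    fix t assume t: "t \<in> {..<NN q \<kappa>}"
    obtain j m where jm: "bidx q \<kappa> ! t = (j,m)" by fastforce
    have tl: "t * p + l' < NN q \<kappa> * p" if "l' < p" for l'
      using block_index_less'[OF that] t by simp
    have "(\<Sum>l'<p. beta_moments p q \<kappa> \<beta> N $$ (r,t*p+l') * monomial_jets p q xs \<kappa> N $$ (s,t*p+l'))
       = (\<Sum>l'<p. (\<beta> j m (r div p)) $$ (r mod p, l') * (if s mod p
           = l' then poly ((pderiv ^^ m) (monom 1 (s div p))) (of_real (xs j)) / of_nat (fact m)
           else 0))"
      by (rule sum.cong[OF refl]) (use r s tl jm in \<open>auto simp: beta_moments_def monomial_jets_def\<close>)
    also have "\<dots> = (\<beta> j m (r div p)) $$ (r mod p, s mod p)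
        * (poly ((pderiv ^^ m) (monom 1 (s div p))) (of_real (xs j)) / of_nat (fact m))"
      using km by (simp add: if_distrib cong: if_cong)
    finally show "(\<Sum>l'<p. beta_moments p q \<kappa> \<beta> N $$ (r,t*p+l') * monomial_jets p q xs \<kappa> N $$ (s,t*p+l'))
       = (case bidx q \<kappa> ! t of (j,m) \<Rightarrow>
          (\<beta> j m (r div p)) $$ (r mod p, s mod p)
              * (poly ((pderiv ^^ m) (monom 1 (s div p))) (of_real (xs j)) / of_nat (fact m)))"
      using jm by simp
  qed
  also have "\<dots> = vform p q xs \<kappa> \<beta> (monomI p (r div p)) (monomI p (s div p)) $$ (r mod p, s mod p)"
    by (rule index_vform_monomI[symmetric]) (use km in auto)
  finally have BL: "(beta_moments p q \<kappa> \<beta> N * transpose_mat (monomial_jets p q xs \<kappa> N)) $$ (r,s)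
      = vform p q xs \<kappa> \<beta> (monomI p (r div p)) (monomI p (s div p)) $$ (r mod p, s mod p)" .
  have vd: "vform p q xs \<kappa> \<beta> P Q \<in> carrier_mat p p" for P Q by (simp add: vform_def)
  show "gram_trunc p (uhat p q xs \<kappa> \<beta> u) N $$ (r,s)
      = (gram_trunc p u N + beta_moments p q \<kappa> \<beta> N * transpose_mat (monomial_jets p q xs \<kappa> N)) $$ (r,s)"
    using r s km u_dim vd BL by (simp add: gram_trunc_def uhat_def index_add_mat_carrier[OF vd])
qed auto

definition pmat_of_coeffs :: "nat \<Rightarrow> nat \<Rightarrow> complex mat \<Rightarrow> complex poly mat" where
  "pmat_of_coeffs p N C = mat (dim_row C) p (\<lambda>(i,l). \<Sum>a\<le>N. monom (C $$ (i, a*p+l)) a)"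

lemma pmat_of_coeffs_dim[simp]: "dim_row (pmat_of_coeffs p N C) = dim_row C"
    "dim_col (pmat_of_coeffs p N C) = p"
  by (simp_all add: pmat_of_coeffs_def)

lemma index_pmat_of_coeffs: "i < dim_row C \<Longrightarrow> l < p \<Longrightarrow> pmat_of_coeffs p N C $$ (i,l)
    = (\<Sum>a\<le>N. monom (C $$ (i, a*p+l)) a)"
  by (simp add: pmat_of_coeffs_def)

lemma coeff_pmat_of_coeffs: "i < dim_row C \<Longrightarrow> l < p \<Longrightarrow> coeff (pmat_of_coeffs p N C $$ (i,l)) e
    = (if e \<le> N then C $$ (i, e*p+l) else 0)"
  by (simp add: index_pmat_of_coeffs coeff_sum coeff_monom)

lemma degree_pmat_of_coeffs: "i < dim_row C \<Longrightarrow> l < p \<Longrightarrow> degree (pmat_of_coeffs p N C $$ (i,l)) \<le> N"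
  by (rule degree_le) (simp add: coeff_pmat_of_coeffs)

lemma degree_le_mdeg_pmat_of_coeffs: assumes "i < dim_row C"
    "l < p" shows "degree (pmat_of_coeffs p N C $$ (i,l)) \<le> mdeg (pmat_of_coeffs p N C)"
  by (rule degree_le_mdeg) (use assms in auto)

lemma bpoly_eq_pmat_of_coeffs:
  assumes b: "block_lower_unitri p S" and n: "n \<le> N" and p: "p > 0"
  shows "bpoly p S n = pmat_of_coeffs p N (block_row p N S n)"
proof (rule eq_matI)
  fix i l assume "i < dim_row (pmat_of_coeffs p N (block_row p N S n))"
      "l < dim_col (pmat_of_coeffs p N (block_row p N S n))"
  hence i: "i < p" and l: "l < p" by auto
  have "pmat_of_coeffs p N (block_row p N S n) $$ (i,l) = (\<Sum>a\<le>N. monom ((S n a) $$ (i, l)) a)"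
    using i l block_index_less[OF l] by (simp add: index_pmat_of_coeffs index_block_row)
  also have "\<dots> = (\<Sum>a\<le>n. monom ((S n a) $$ (i, l)) a)"
    by (rule sum.mono_neutral_right) (use n i l block_lower_unitri_upper_zero[OF b] in auto)
  also have "\<dots> = bpoly p S n $$ (i,l)" using i l by (simp add: bpoly_def)
  finally show "bpoly p S n $$ (i,l) = pmat_of_coeffs p N (block_row p N S n) $$ (i,l)" by simp
qed (auto simp: bpoly_def)

lemma pair_row_pmat_of_coeffs:
  assumes C: "C \<in> carrier_mat p ((N+1)*p)" and p: "p > 0"
  shows "pair_row p q \<kappa> \<beta> (pmat_of_coeffs p N C) = C * beta_moments p q \<kappa> \<beta> N"
proof (rule eq_matI)
  fix i c assume "i < dim_row (C * beta_moments p q \<kappa> \<beta> N)" "c < dim_col (C * beta_moments p q \<kappa> \<beta> N)"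
  hence i: "i < p" and c: "c < NN q \<kappa> * p" using C by auto
  obtain j m where jm: "bidx q \<kappa> ! (c div p) = (j,m)" by fastforce
  have cm: "c mod p < p" using p by simp
  have "pair_row p q \<kappa> \<beta> (pmat_of_coeffs p N C) $$ (i,c)
      = pairR p (pmat_of_coeffs p N C) (\<beta> j m) $$ (i, c mod p)"
    using i c jm by (simp add: pair_row_def)
  also have "\<dots> = (\<Sum>k<p. \<Sum>r\<le>mdeg (pmat_of_coeffs p N C). coeff (pmat_of_coeffs p N C $$ (i,k)) r
      * (\<beta> j m r) $$ (k, c mod p))"
    using i cm by (simp add: pairR_def)
  also have "\<dots> = (\<Sum>k<p. \<Sum>r\<le>N. coeff (pmat_of_coeffs p N C $$ (i,k)) r * (\<beta> j m r) $$ (k, c mod p))"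
    by (rule sum.cong[OF refl], rule sum_coeff_degree_cong)
        (use i C in \<open>auto intro: degree_le_mdeg_pmat_of_coeffs degree_pmat_of_coeffs\<close>)
  also have "\<dots> = (\<Sum>k<p. \<Sum>r\<le>N. C $$ (i, r*p+k) * (\<beta> j m r) $$ (k, c mod p))"
    using i C by (simp add: coeff_pmat_of_coeffs)
  also have "\<dots> = (\<Sum>r\<le>N. \<Sum>k<p. C $$ (i, r*p+k) * beta_moments p q \<kappa> \<beta> N $$ (r*p+k, c))"
    by (subst sum.swap) (use i c jm block_index_less in \<open>auto simp: beta_moments_def intro!: sum.cong\<close>)
  also have "\<dots> = (C * beta_moments p q \<kappa> \<beta> N) $$ (i,c)"
    by (subst index_mult_mat_sum[OF C beta_moments_carrier]) (use i c in \<open>auto simp: sum_atMost_blocks\<close>)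
  finally show "pair_row p q \<kappa> \<beta> (pmat_of_coeffs p N C) $$ (i,c)
      = (C * beta_moments p q \<kappa> \<beta> N) $$ (i,c)" .
qed (use C in \<open>auto simp: pair_row_def\<close>)

lemma higher_pderiv_monom_smult: "(pderiv ^^ m) (monom c a) = smult c ((pderiv ^^ m) (monom 1 a))"
proof -
  have "monom c a = smult c (monom 1 a)" by (simp add: smult_monom)
  thus ?thesis by (simp only: higher_pderiv_smult)
qed

lemma jet_pmat_of_coeffs:
  assumes C: "C \<in> carrier_mat p ((N+1)*p)" and p: "p > 0"
  shows "jet p q xs \<kappa> (pmat_of_coeffs p N C) = C * monomial_jets p q xs \<kappa> N"
proof (rule eq_matI)
  fix i c assume "i < dim_row (C * monomial_jets p q xs \<kappa> N)"
      "c < dim_col (C * monomial_jets p q xs \<kappa> N)"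
  hence i: "i < p" and c: "c < NN q \<kappa> * p" using C by auto
  obtain j m where jm: "bidx q \<kappa> ! (c div p) = (j,m)" by fastforce
  have cm: "c mod p < p" using p by simp
  have "jet p q xs \<kappa> (pmat_of_coeffs p N C) $$ (i,c)
      = poly ((pderiv ^^ m) (pmat_of_coeffs p N C $$ (i, c mod p))) (of_real (xs j)) / of_nat (fact m)"
    using i c jm by (simp add: jet_def)
  also have "\<dots> = (\<Sum>a\<le>N. C $$ (i, a*p + c mod p)
      * (poly ((pderiv ^^ m) (monom 1 a)) (of_real (xs j)) / of_nat (fact m)))"
    using i cm C by (simp add: index_pmat_of_coeffs higher_pderiv_sum poly_sum
        higher_pderiv_monom_smult[of m "C $$ _"] sum_divide_distrib)
  also have "\<dots> = (\<Sum>a\<le>N. \<Sum>k<p. C $$ (i, a*p+k) * monomial_jets p q xs \<kappa> N $$ (a*p+k, c))"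
  proof (rule sum.cong[OF refl])
    fix a assume a: "a \<in> {..N}"
    have "(\<Sum>k<p. C $$ (i, a*p+k) * monomial_jets p q xs \<kappa> N $$ (a*p+k, c))
       = (\<Sum>k<p. C $$ (i, a*p+k) * (if k
           = c mod p then poly ((pderiv ^^ m) (monom 1 a)) (of_real (xs j)) / of_nat (fact m) else 0))"
      by (rule sum.cong[OF refl]) (use a c jm block_index_less in \<open>auto simp: monomial_jets_def\<close>)
    also have "\<dots> = C $$ (i, a*p + c mod p)
        * (poly ((pderiv ^^ m) (monom 1 a)) (of_real (xs j)) / of_nat (fact m))"
      using cm by (simp add: if_distrib cong: if_cong)
    finally show "C $$ (i, a*p + c mod p)
        * (poly ((pderiv ^^ m) (monom 1 a)) (of_real (xs j)) / of_nat (fact m))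
       = (\<Sum>k<p. C $$ (i, a*p+k) * monomial_jets p q xs \<kappa> N $$ (a*p+k, c))" by simp
  qed
  also have "\<dots> = (C * monomial_jets p q xs \<kappa> N) $$ (i,c)"
    by (subst index_mult_mat_sum[OF C monomial_jets_carrier])
        (use i c in \<open>auto simp: sum_atMost_blocks\<close>)
  finally show "jet p q xs \<kappa> (pmat_of_coeffs p N C) $$ (i,c)
      = (C * monomial_jets p q xs \<kappa> N) $$ (i,c)" .
qed (use C in \<open>auto simp: jet_def\<close>)

definition powers_col :: "nat \<Rightarrow> nat \<Rightarrow> complex \<Rightarrow> complex mat" where
  "powers_col p N y = mat ((N+1)*p) p (\<lambda>(r,l). if r mod p = l then y ^ (r div p) else 0)"

lemma powers_col_carrier[simp]: "powers_col p N y \<in> carrier_mat ((N+1)*p) p"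
  by (simp add: powers_col_def)

lemma powers_col_dim[simp]: "dim_row (powers_col p N y) = (N+1)*p" "dim_col (powers_col p N y) = p"
  by (simp_all add: powers_col_def)

lemma meval_pmat_of_coeffs:
  assumes C: "C \<in> carrier_mat r ((N+1)*p)" and p: "p > 0"
  shows "meval (pmat_of_coeffs p N C) y = C * powers_col p N y"
proof (rule eq_matI)
  fix i l assume "i < dim_row (C * powers_col p N y)" "l < dim_col (C * powers_col p N y)"
  hence i: "i < r" and l: "l < p" using C by auto
  have "meval (pmat_of_coeffs p N C) y $$ (i,l) = (\<Sum>a\<le>N. C $$ (i, a*p+l) * y ^ a)"
    using i l C by (simp add: meval_def index_pmat_of_coeffs poly_sum poly_monom)
  also have "\<dots> = (\<Sum>a\<le>N. \<Sum>k<p. C $$ (i, a*p+k) * powers_col p N y $$ (a*p+k, l))"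
  proof (rule sum.cong[OF refl])
    fix a assume a: "a \<in> {..N}"
    have "(\<Sum>k<p. C $$ (i, a*p+k) * powers_col p N y $$ (a*p+k, l)) = (\<Sum>k<p. C $$ (i, a*p+k) * (if k
        = l then y ^ a else 0))"
      by (rule sum.cong[OF refl]) (use a l block_index_less in \<open>auto simp: powers_col_def\<close>)
    also have "\<dots> = C $$ (i, a*p+l) * y ^ a" using l by (simp add: if_distrib cong: if_cong)
    finally show "C $$ (i, a*p+l) * y ^ a = (\<Sum>k<p. C $$ (i, a*p+k) * powers_col p N y $$ (a*p+k, l))"
        by simp
  qed
  also have "\<dots> = (C * powers_col p N y) $$ (i,l)"
    by (subst index_mult_mat_sum[OF C powers_col_carrier]) (use i l in \<open>auto simp: sum_atMost_blocks\<close>)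
  finally show "meval (pmat_of_coeffs p N C) y $$ (i,l) = (C * powers_col p N y) $$ (i,l)" .
qed (use C in \<open>auto simp: meval_def\<close>)

lemma pmat_of_coeffs_carrier: "C \<in> carrier_mat r n \<Longrightarrow> pmat_of_coeffs p N C \<in> carrier_mat r p"
  by (simp add: pmat_of_coeffs_def)

lemma pair_col_pmat_of_coeffs:
  assumes L: "\<Lambda> \<in> carrier_mat (NN q \<kappa> * p) ((N+1)*p)" and p: "p > 0"
  shows "pair_col p q \<kappa> \<beta> (pmat_of_coeffs p N \<Lambda>) = \<Lambda> * beta_moments p q \<kappa> \<beta> N"
proof (rule eq_matI)
  fix c d assume "c < dim_row (\<Lambda> * beta_moments p q \<kappa> \<beta> N)" "d < dim_col (\<Lambda> * beta_moments p q \<kappa> \<beta> N)"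
  hence c: "c < NN q \<kappa> * p" and d: "d < NN q \<kappa> * p" using L by auto
  define Lb where "Lb = mat p ((N+1)*p) (\<lambda>(i,e). \<Lambda> $$ ((c div p)*p+i, e))"
  have Lb: "Lb \<in> carrier_mat p ((N+1)*p)" by (simp add: Lb_def)
  have rowlt: "(c div p)*p + i < NN q \<kappa> * p" if "i < p" for i
    using block_index_less'[OF that, of "c div p" "NN q \<kappa>"] c p by (simp add: less_mult_imp_div_less)
  have blk: "block_of_col p (pmat_of_coeffs p N \<Lambda>) (c div p) = pmat_of_coeffs p N Lb"
    by (rule eq_matI)
      (use L rowlt in \<open>auto simp: block_of_col_def index_pmat_of_coeffs Lb_def intro!: sum.cong\<close>)
  have "pair_col p q \<kappa> \<beta> (pmat_of_coeffs p N \<Lambda>) $$ (c,d)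
      = (Lb * beta_moments p q \<kappa> \<beta> N) $$ (c mod p, d)"
    using c d by (simp add: pair_col_def blk pair_row_pmat_of_coeffs[OF Lb p])
  also have "\<dots> = (\<Lambda> * beta_moments p q \<kappa> \<beta> N) $$ (c, d)"
  proof -
    have cc: "(c div p)*p + c mod p = c" by simp
    have "(Lb * beta_moments p q \<kappa> \<beta> N) $$ (c mod p, d)
        = (\<Sum>s<(N+1)*p. Lb $$ (c mod p, s) * beta_moments p q \<kappa> \<beta> N $$ (s,d))"
      by (rule index_mult_mat_sum[OF Lb beta_moments_carrier]) (use p d in auto)
    also have "\<dots> = (\<Sum>s<(N+1)*p. \<Lambda> $$ (c, s) * beta_moments p q \<kappa> \<beta> N $$ (s,d))"
      using p by (intro sum.cong refl) (simp add: Lb_def cc)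
    also have "\<dots> = (\<Lambda> * beta_moments p q \<kappa> \<beta> N) $$ (c, d)"
      by (rule index_mult_mat_sum[OF L beta_moments_carrier, symmetric]) (use c d in auto)
    finally show ?thesis .
  qed
  finally show "pair_col p q \<kappa> \<beta> (pmat_of_coeffs p N \<Lambda>) $$ (c,d)
      = (\<Lambda> * beta_moments p q \<kappa> \<beta> N) $$ (c, d)" .
qed (use L in \<open>auto simp: pair_col_def\<close>)

lemma const_pmat_mult_pmat_of_coeffs:
  assumes c: "c \<in> carrier_mat p n" and C: "C \<in> carrier_mat n ((N+1)*p)"
  shows "const_pmat c * pmat_of_coeffs p N C = pmat_of_coeffs p N (c * C)"
proof (rule eq_matI)
  fix i l assume "i < dim_row (pmat_of_coeffs p N (c * C))" "l < dim_col (pmat_of_coeffs p N (c * C))"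
  hence i: "i < p" and l: "l < p" using c by auto
  have cp: "const_pmat c \<in> carrier_mat p n" using c by (simp add: const_pmat_def)
  have PC: "pmat_of_coeffs p N C \<in> carrier_mat n p" using C by (rule pmat_of_coeffs_carrier)
  have "(const_pmat c * pmat_of_coeffs p N C) $$ (i,l)
      = (\<Sum>t<n. const_pmat c $$ (i,t) * pmat_of_coeffs p N C $$ (t,l))"
    by (rule index_mult_mat_sum[OF cp PC i l])
  also have "\<dots> = (\<Sum>t<n. \<Sum>a\<le>N. monom (c $$ (i,t) * C $$ (t, a*p+l)) a)"
    using i l c C by (intro sum.cong refl)
        (simp add: const_pmat_def index_pmat_of_coeffs sum_distrib_left smult_monom)
  also have "\<dots> = (\<Sum>a\<le>N. monom (\<Sum>t<n. c $$ (i,t) * C $$ (t, a*p+l)) a)"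
    by (subst sum.swap) (simp add: monom_sum)
  also have "\<dots> = pmat_of_coeffs p N (c * C) $$ (i,l)"
    using i l c C by (auto simp: index_pmat_of_coeffs scalar_prod_def atLeast0LessThan intro!: sum.cong)
  finally show "(const_pmat c * pmat_of_coeffs p N C) $$ (i,l) = pmat_of_coeffs p N (c * C) $$ (i,l)" .
qed (use c in \<open>auto simp: const_pmat_def\<close>)

lemma pmat_of_coeffs_minus:
  assumes A: "A \<in> carrier_mat r ((N+1)*p)" and B: "B \<in> carrier_mat r ((N+1)*p)"
  shows "pmat_of_coeffs p N A - pmat_of_coeffs p N B = pmat_of_coeffs p N (A - B)"
proof (rule eq_matI)
  fix i l assume "i < dim_row (pmat_of_coeffs p N (A - B))" "l < dim_col (pmat_of_coeffs p N (A - B))"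
  hence i: "i < r" and l: "l < p" using A B by auto
  show "(pmat_of_coeffs p N A - pmat_of_coeffs p N B) $$ (i,l) = pmat_of_coeffs p N (A - B) $$ (i,l)"
    using i l A B block_index_less[OF l]
        by (simp add: index_pmat_of_coeffs sum_subtractf[symmetric] diff_monom)
qed (use A B in auto)

section \<open>Christoffel--Darboux kernels\<close>

lemma smult_sum_right: "smult c (\<Sum>x\<in>A. f x) = (\<Sum>x\<in>A. smult c (f x))"
  by (induction A rule: infinite_finite_induct) (auto simp: smult_add_right)

lemma poly_map_poly_const: "poly (map_poly (\<lambda>c. [:c:]) A) [:z:] = [:poly A z:]"
  by (simp add: pcompose_altdef[symmetric] pcompose_pCons_0)

lemma pderiv_map_poly_const: "pderiv (map_poly (\<lambda>c. [:c::complex:]) A)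
    = map_poly (\<lambda>c. [:c:]) (pderiv A)"
  by (rule poly_eqI) (simp add: coeff_pderiv coeff_map_poly of_nat_poly)

lemma higher_pderiv_map_poly_const: "(pderiv ^^ m) (map_poly (\<lambda>c. [:c::complex:]) A)
    = map_poly (\<lambda>c. [:c:]) ((pderiv ^^ m) A)"
  by (induction m) (simp_all add: pderiv_map_poly_const)

lemma poly_pderiv_kernel_term:
  "poly ((pderiv ^^ m) (map_poly (\<lambda>c. [:c::complex:]) A * [:[:h:]:] * [:B:])) [:z:]
     = smult (poly ((pderiv ^^ m) A) z * h) B"
proof -
  have "map_poly (\<lambda>c. [:c::complex:]) A * [:[:h:]:] * [:B:] = map_poly (\<lambda>c. [:c:]) A * [:smult h B:]"
    by (simp add: mult.assoc)
  thus ?thesis by (simp add: higher_pderiv_smult higher_pderiv_map_poly_const poly_map_poly_const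
      mult.commute)
qed

lemma poly_pderiv_CDkernel:
  assumes "s < p" "l < p"
  shows "poly ((pderiv ^^ m') (CDkernel p S1 H S2 m $$ (s,l))) [:z:]
    = (\<Sum>k\<le>m. \<Sum>a<p. \<Sum>b<p. smult (poly ((pderiv ^^ m') (bpoly p S2 k $$ (a,s))) z
        * minv (H k) $$ (a,b)) (bpoly p S1 k $$ (b,l)))"
  using assms by (simp add: CDkernel_def higher_pderiv_sum poly_sum poly_pderiv_kernel_term del:
      mult_pCons_right mult_pCons_left)

text \<open>K_m(x,y) = X(y)^T W X(x) for the column X of monomial blocks I x^a, with
  W = sum_(k<=m) R_2k^T H_k^-1 R_1k.\<close>

definition CD_term :: "nat \<Rightarrow> nat \<Rightarrow> (nat \<Rightarrow> nat \<Rightarrow> complex mat) \<Rightarrow> (nat \<Rightarrow> complex mat) \<Rightarrow>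
    (nat \<Rightarrow> nat \<Rightarrow> complex mat) \<Rightarrow> nat \<Rightarrow> complex mat" where
  "CD_term p N S1 H S2 k = transpose_mat (block_row p N S2 k) * minv (H k) * block_row p N S1 k"

primrec CD_coeffs :: "nat \<Rightarrow> nat \<Rightarrow> (nat \<Rightarrow> nat \<Rightarrow> complex mat) \<Rightarrow> (nat \<Rightarrow> complex mat) \<Rightarrow>
    (nat \<Rightarrow> nat \<Rightarrow> complex mat) \<Rightarrow> nat \<Rightarrow> complex mat" where
  "CD_coeffs p N S1 H S2 0 = CD_term p N S1 H S2 0"
| "CD_coeffs p N S1 H S2 (Suc m) = CD_coeffs p N S1 H S2 m + CD_term p N S1 H S2 (Suc m)"

lemma CD_term_carrier: "minv (H k) \<in> carrier_mat p p \<Longrightarrow>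
    CD_term p N S1 H S2 k \<in> carrier_mat ((N+1)*p) ((N+1)*p)"
  unfolding CD_term_def by (intro mult_carrier_mat[of _ _ p] transpose_carrier_mat block_row_carrier)
      auto

lemma CD_coeffs_carrier: "\<forall>k\<le>m. minv (H k) \<in> carrier_mat p p \<Longrightarrow>
    CD_coeffs p N S1 H S2 m \<in> carrier_mat ((N+1)*p) ((N+1)*p)"
proof (induction m)
  case 0 thus ?case using CD_term_carrier[of H 0 p N S1 S2] by simp
next
  case (Suc m) thus ?case using CD_term_carrier[of H "Suc m" p N S1 S2] by simp
qed

lemma index_mult_CD_coeffs:
  assumes Hc: "\<forall>k\<le>m. minv (H k) \<in> carrier_mat p p" and V: "V \<in> carrier_mat ((N+1)*p) n"
    and c: "c < n" and e: "e < (N+1)*p"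
  shows "(transpose_mat V * CD_coeffs p N S1 H S2 m) $$ (c,e)
      = (\<Sum>k\<le>m. (transpose_mat (block_row p N S2 k * V) * minv (H k) * block_row p N S1 k) $$ (c,e))"
  using Hc
proof (induction m)
  case 0
  have "transpose_mat V * CD_term p N S1 H S2 0
      = transpose_mat (block_row p N S2 0 * V) * minv (H 0) * block_row p N S1 0"
    unfolding CD_term_def transpose_mult[OF block_row_carrier V]
    by (rule assoc_mult_mat4[of _ n "(N+1)*p" _ p _ p _ "(N+1)*p"]) (use 0 V in auto)
  thus ?case by simp
next
  case (Suc m)
  have Wc: "CD_coeffs p N S1 H S2 m \<in> carrier_mat ((N+1)*p) ((N+1)*p)" using Suc.prems
      by (intro CD_coeffs_carrier) auto
  have Tc: "CD_term p N S1 H S2 (Suc m) \<in> carrier_mat ((N+1)*p) ((N+1)*p)" using Suc.prems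
      by (intro CD_term_carrier) auto
  have e1: "transpose_mat V * CD_term p N S1 H S2 (Suc m)
      = transpose_mat (block_row p N S2 (Suc m) * V) * minv (H (Suc m)) * block_row p N S1 (Suc m)"
    unfolding CD_term_def transpose_mult[OF block_row_carrier V]
    by (rule assoc_mult_mat4[of _ n "(N+1)*p" _ p _ p _ "(N+1)*p"]) (use Suc.prems V in auto)
  have e2: "transpose_mat V * CD_coeffs p N S1 H S2 (Suc m)
      = transpose_mat V * CD_coeffs p N S1 H S2 m + transpose_mat V * CD_term p N S1 H S2 (Suc m)"
    unfolding CD_coeffs.simps by (rule mult_add_distrib_mat[of _ n "(N+1)*p"]) (use Wc Tc V in auto)
  note eqs = e1 e2
  have cc: "transpose_mat V * CD_term p N S1 H S2 (Suc m) \<in> carrier_mat n ((N+1)*p)" using Tc V by auto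
  have IH: "(transpose_mat V * CD_coeffs p N S1 H S2 m) $$ (c,e)
      = (\<Sum>k\<le>m. (transpose_mat (block_row p N S2 k * V) * minv (H k) * block_row p N S1 k) $$ (c,e))"
    by (rule Suc.IH) (use Suc.prems in auto)
  have "(transpose_mat V * CD_coeffs p N S1 H S2 (Suc m)) $$ (c,e)
      = (transpose_mat V * CD_coeffs p N S1 H S2 m) $$ (c,e) + (transpose_mat V
      * CD_term p N S1 H S2 (Suc m)) $$ (c,e)"
    unfolding eqs(2) by (rule index_add_mat_carrier[OF cc c e])
  thus ?case unfolding IH eqs(1) by (simp only: sum.atMost_Suc)
qed

lemma index_mult_CD_coeffs_sum:
  assumes Hc: "\<forall>k\<le>m. minv (H k) \<in> carrier_mat p p" and V: "V \<in> carrier_mat ((N+1)*p) n"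
    and c: "c < n" and e: "e < (N+1)*p"
  shows "(transpose_mat V * CD_coeffs p N S1 H S2 m) $$ (c,e)
    = (\<Sum>k\<le>m. \<Sum>a<p. \<Sum>b<p. (block_row p N S2 k * V) $$ (a,c) * minv (H k) $$ (a,b)
        * block_row p N S1 k $$ (b,e))"
  unfolding index_mult_CD_coeffs[OF Hc V c e]
proof (rule sum.cong[OF refl])
  fix k assume k: "k \<in> {..m}"
  have RV: "transpose_mat (block_row p N S2 k * V) \<in> carrier_mat n p" using V by auto
  have "(transpose_mat (block_row p N S2 k * V) * minv (H k) * block_row p N S1 k) $$ (c,e)
      = (\<Sum>b<p. (\<Sum>a<p. transpose_mat (block_row p N S2 k * V) $$ (c,a) * minv (H k) $$ (a,b))
          * block_row p N S1 k $$ (b,e))"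
    by (rule index_mult_mat3_sum[OF RV _ block_row_carrier c e]) (use Hc k in auto)
  also have "\<dots> = (\<Sum>b<p. \<Sum>a<p. (block_row p N S2 k * V) $$ (a,c) * minv (H k) $$ (a,b)
      * block_row p N S1 k $$ (b,e))"
    using c V by (simp only: sum_distrib_right) (intro sum.cong refl; simp)
  also have "\<dots> = (\<Sum>a<p. \<Sum>b<p. (block_row p N S2 k * V) $$ (a,c) * minv (H k) $$ (a,b)
      * block_row p N S1 k $$ (b,e))"
    by (rule sum.swap)
  finally show "(transpose_mat (block_row p N S2 k * V) * minv (H k) * block_row p N S1 k) $$ (c,e)
      = (\<Sum>a<p. \<Sum>b<p. (block_row p N S2 k * V) $$ (a,c) * minv (H k) $$ (a,b)
          * block_row p N S1 k $$ (b,e))" .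
qed

lemma pmat_of_coeffs_CD_coeffs:
  assumes p: "p > 0" and Hc: "\<forall>k\<le>m. minv (H k) \<in> carrier_mat p p" and b1: "block_lower_unitri p S1"
    and mN: "m \<le> N" and V: "V \<in> carrier_mat ((N+1)*p) n'" and F: "F \<in> carrier_mat n' p"
    and Fent: "\<And>c l. c < n' \<Longrightarrow> l < p \<Longrightarrow> F $$ (c,l) = (\<Sum>k\<le>m. \<Sum>a<p. \<Sum>b<p.
        smult ((block_row p N S2 k * V) $$ (a,c) * minv (H k) $$ (a,b)) (bpoly p S1 k $$ (b,l)))"
  shows "F = pmat_of_coeffs p N (transpose_mat V * CD_coeffs p N S1 H S2 m)"
proof (rule eq_matI)
  fix c l assume "c < dim_row (pmat_of_coeffs p N (transpose_mat V * CD_coeffs p N S1 H S2 m))"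
      "l < dim_col (pmat_of_coeffs p N (transpose_mat V * CD_coeffs p N S1 H S2 m))"
  hence c: "c < n'" and l: "l < p" using V by auto
  show "F $$ (c,l) = pmat_of_coeffs p N (transpose_mat V * CD_coeffs p N S1 H S2 m) $$ (c,l)"
  proof (rule poly_eqI)
    fix e
    have "coeff (bpoly p S1 k $$ (b,l)) e = (if e \<le> N then block_row p N S1 k $$ (b, e*p+l) else 0)"
      if "k \<le> m" "b < p" for k b
      using that mN l by (simp add: bpoly_eq_pmat_of_coeffs[OF b1 _ p, of k N] coeff_pmat_of_coeffs)
    then have "coeff (F $$ (c,l)) e = (if e \<le> N then (\<Sum>k\<le>m. \<Sum>a<p. \<Sum>b<p.
        (block_row p N S2 k * V) $$ (a,c) * minv (H k) $$ (a,b) * block_row p N S1 k $$ (b, e*p+l))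
        else 0)"
      using c l by (simp add: Fent coeff_sum)
    also have "\<dots> = coeff (pmat_of_coeffs p N (transpose_mat V * CD_coeffs p N S1 H S2 m) $$ (c,l)) e"
      using c l V block_index_less[OF l, of e N]
      by (simp add: coeff_pmat_of_coeffs index_mult_CD_coeffs_sum[OF Hc V c])
    finally show "coeff (F $$ (c,l)) e
        = coeff (pmat_of_coeffs p N (transpose_mat V * CD_coeffs p N S1 H S2 m) $$ (c,l)) e" .
  qed
qed (use F V in auto)

lemma jet01_CDkernel:
  assumes p: "p > 0" and Hc: "\<forall>k\<le>m. minv (H k) \<in> carrier_mat p p" and b1: "block_lower_unitri p S1"
    and b2: "block_lower_unitri p S2" and mN: "m \<le> N"
  shows "jet01 p q xs \<kappa> (CDkernel p S1 H S2 m)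
      = pmat_of_coeffs p N (transpose_mat (monomial_jets p q xs \<kappa> N) * CD_coeffs p N S1 H S2 m)"
proof (rule pmat_of_coeffs_CD_coeffs[OF p Hc b1 mN monomial_jets_carrier])
  show "jet01 p q xs \<kappa> (CDkernel p S1 H S2 m) \<in> carrier_mat (NN q \<kappa> * p) p" by (simp add: jet01_def)
  fix c l assume c: "c < NN q \<kappa> * p" and l: "l < p"
  obtain j m' where jm: "bidx q \<kappa> ! (c div p) = (j,m')" by fastforce
  have cm: "c mod p < p" using p by simp
  have RL: "(block_row p N S2 k * monomial_jets p q xs \<kappa> N) $$ (a,c)
      = poly ((pderiv ^^ m') (bpoly p S2 k $$ (a, c mod p))) (of_real (xs j)) / of_nat (fact m')"
    if "k \<le> m" "a < p" for k a
  proof -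
    have "block_row p N S2 k * monomial_jets p q xs \<kappa> N = jet p q xs \<kappa> (bpoly p S2 k)"
      using bpoly_eq_pmat_of_coeffs[OF b2 _ p, of k N] that mN
        jet_pmat_of_coeffs[OF block_row_carrier p] by simp
    thus ?thesis using that c jm by (simp add: jet_def)
  qed
  have "jet01 p q xs \<kappa> (CDkernel p S1 H S2 m) $$ (c,l) =
      smult (1 / of_nat (fact m')) (poly ((pderiv ^^ m') (CDkernel p S1 H S2 m $$
          (c mod p, l))) [:of_real (xs j):])"
    using c l jm by (simp add: jet01_def)
  also have "\<dots> = (\<Sum>k\<le>m. \<Sum>a<p. \<Sum>b<p. smult ((block_row p N S2 k * monomial_jets p q xs \<kappa> N) $$ (a,c)
      * minv (H k) $$ (a,b)) (bpoly p S1 k $$ (b,l)))"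
    using cm l by (simp add: poly_pderiv_CDkernel smult_sum_right RL del: index_mult_mat)
  finally show "jet01 p q xs \<kappa> (CDkernel p S1 H S2 m) $$ (c,l)
      = (\<Sum>k\<le>m. \<Sum>a<p. \<Sum>b<p. smult ((block_row p N S2 k * monomial_jets p q xs \<kappa> N) $$ (a,c)
      * minv (H k) $$ (a,b)) (bpoly p S1 k $$ (b,l)))" .
qed

lemma kernel_at_y_CDkernel:
  assumes p: "p > 0" and Hc: "\<forall>k\<le>m. minv (H k) \<in> carrier_mat p p" and b1: "block_lower_unitri p S1"
    and b2: "block_lower_unitri p S2" and mN: "m \<le> N"
  shows "kernel_at_y (CDkernel p S1 H S2 m) y
      = pmat_of_coeffs p N (transpose_mat (powers_col p N y) * CD_coeffs p N S1 H S2 m)"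
proof (rule pmat_of_coeffs_CD_coeffs[OF p Hc b1 mN powers_col_carrier])
  show "kernel_at_y (CDkernel p S1 H S2 m) y \<in> carrier_mat p p"
      by (simp add: kernel_at_y_def CDkernel_def)
  fix s l assume s: "s < p" and l: "l < p"
  have RX: "(block_row p N S2 k * powers_col p N y) $$ (a,s) = poly (bpoly p S2 k $$ (a, s)) y"
    if "k \<le> m" "a < p" for k a
  proof -
    have "block_row p N S2 k * powers_col p N y = meval (bpoly p S2 k) y"
      using bpoly_eq_pmat_of_coeffs[OF b2 _ p, of k N] that mN
        meval_pmat_of_coeffs[OF block_row_carrier p] by simp
    thus ?thesis using that s by (simp add: meval_def bpoly_def)
  qed
  have "kernel_at_y (CDkernel p S1 H S2 m) y $$ (s,l)
      = poly ((pderiv ^^ 0) (CDkernel p S1 H S2 m $$ (s, l))) [:y:]"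
    using s l by (simp add: kernel_at_y_def CDkernel_def)
  also have "\<dots> = (\<Sum>k\<le>m. \<Sum>a<p. \<Sum>b<p. smult ((block_row p N S2 k * powers_col p N y) $$ (a,s)
      * minv (H k) $$ (a,b)) (bpoly p S1 k $$ (b,l)))"
    using s l by (simp only: poly_pderiv_CDkernel) (simp add: RX del: index_mult_mat)
  finally show "kernel_at_y (CDkernel p S1 H S2 m) y $$ (s,l)
      = (\<Sum>k\<le>m. \<Sum>a<p. \<Sum>b<p. smult ((block_row p N S2 k * powers_col p N y) $$ (a,s)
      * minv (H k) $$ (a,b)) (bpoly p S1 k $$ (b,l)))" .
qed

lemma CD_coeffs_dim:
  assumes "\<forall>k. minv (H k) \<in> carrier_mat p p"
  shows "dim_row (CD_coeffs p N S1 H S2 m) = (N+1)*p" "dim_col (CD_coeffs p N S1 H S2 m) = (N+1)*p"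
  using CD_coeffs_carrier[of m H p N S1 S2] assms by auto

lemma CD_coeffs_gram_block_row:
  assumes gf: "gauss_factorization p G S1 H S2" and G: "\<forall>a b. G a b \<in> carrier_mat p p" and p: "p > 0"
    and Hi: "\<forall>k. minv (H k) \<in> carrier_mat p p \<and> minv (H k) * H k = 1\<^sub>m p"
    and mN: "m \<le> N" and l: "l \<le> N"
  shows "CD_coeffs p N S1 H S2 m * (gram_trunc p G N * transpose_mat (block_row p N S2 l))
       = (if l \<le> m then transpose_mat (block_row p N S2 l) else 0\<^sub>m ((N+1)*p) p)"
  using mN
proof (induction m)
  have md: "dim_row (minv (H k)) = p" "dim_col (minv (H k)) = p" for k using Hi by auto
  case 0
  have "CD_term p N S1 H S2 0 * (gram_trunc p G N * transpose_mat (block_row p N S2 l))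
     = transpose_mat (block_row p N S2 0) * (minv (H 0) * (block_row p N S1 0 * (gram_trunc p G N
         * transpose_mat (block_row p N S2 l))))"
    using Hi unfolding CD_term_def by (simp add: assoc_mult_mat_dim carrier_matD md)
  also have "\<dots> = (if l \<le> 0 then transpose_mat (block_row p N S2 l) else 0\<^sub>m ((N+1)*p) p)"
    using Hi l by (simp add: block_row_gram_block_row'[OF gf G p _ l] carrier_matD md)
  finally show ?case by simp
next
  case (Suc m)
  have md: "dim_row (minv (H k)) = p" "dim_col (minv (H k)) = p" for k using Hi by auto
  have "CD_term p N S1 H S2 (Suc m) * (gram_trunc p G N * transpose_mat (block_row p N S2 l))
     = transpose_mat (block_row p N S2 (Suc m)) * (minv (H (Suc m)) * (block_row p N S1 (Suc m)
         * (gram_trunc p G N * transpose_mat (block_row p N S2 l))))"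
    using Hi unfolding CD_term_def by (simp add: assoc_mult_mat_dim carrier_matD md)
  also have "\<dots> = (if l = Suc m then transpose_mat (block_row p N S2 l) else 0\<^sub>m ((N+1)*p) p)"
    using Hi l Suc.prems by (simp add: block_row_gram_block_row'[OF gf G p _ l] carrier_matD md)
  finally have T: "CD_term p N S1 H S2 (Suc m) * (gram_trunc p G N * transpose_mat (block_row p N S2 l))
      = (if l = Suc m then transpose_mat (block_row p N S2 l) else 0\<^sub>m ((N+1)*p) p)" .
  have "CD_coeffs p N S1 H S2 (Suc m) * (gram_trunc p G N * transpose_mat (block_row p N S2 l))
    = CD_coeffs p N S1 H S2 m * (gram_trunc p G N * transpose_mat (block_row p N S2 l))
        + CD_term p N S1 H S2 (Suc m) * (gram_trunc p G N * transpose_mat (block_row p N S2 l))"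
    using Hi by (simp add: add_mult_distrib_mat_dim CD_coeffs_dim CD_term_def carrier_matD md)
  also have "\<dots> = (if l \<le> Suc m then transpose_mat (block_row p N S2 l) else 0\<^sub>m ((N+1)*p) p)"
    unfolding T Suc.IH[OF Suc_leD[OF Suc.prems]]
        by (auto simp: left_add_zero_mat_dim right_add_zero_mat_dim)
  finally show ?case .
qed

lemma block_row_gram_CD_coeffs:
  assumes gf: "gauss_factorization p G S1 H S2" and G: "\<forall>a b. G a b \<in> carrier_mat p p" and p: "p > 0"
    and Hi: "\<forall>k. minv (H k) \<in> carrier_mat p p \<and> H k * minv (H k) = 1\<^sub>m p"
    and mN: "m \<le> N" and l: "l \<le> N"
  shows "block_row p N S1 l * (gram_trunc p G N * CD_coeffs p N S1 H S2 m)
       = (if l \<le> m then block_row p N S1 l else 0\<^sub>m p ((N+1)*p))"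
  using mN
proof (induction m)
  have md: "dim_row (minv (H k)) = p" "dim_col (minv (H k)) = p" for k using Hi by auto
  case 0
  have "block_row p N S1 l * (gram_trunc p G N * CD_term p N S1 H S2 0)
     = (block_row p N S1 l * (gram_trunc p G N * transpose_mat (block_row p N S2 0))) * (minv (H 0)
         * block_row p N S1 0)"
    using Hi unfolding CD_term_def by (simp add: assoc_mult_mat_dim carrier_matD md)
  also have "\<dots> = (if l = 0 then H 0 * (minv (H 0) * block_row p N S1 0) else 0\<^sub>m p p * (minv (H 0)
      * block_row p N S1 0))"
    using l by (simp add: block_row_gram_block_row'[OF gf G p l])
  also have "\<dots> = (if l \<le> 0 then block_row p N S1 l else 0\<^sub>m p ((N+1)*p))"
    using right_inverse_mult_cancel[of "H 0"
        "minv (H 0)" p "block_row p N S1 0"] Hi gf unfolding gauss_factorization_def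
        by (auto simp: md carrier_matD)
  finally show ?case by simp
next
  case (Suc m)
  have md: "dim_row (minv (H k)) = p" "dim_col (minv (H k)) = p" for k using Hi by auto
  have "block_row p N S1 l * (gram_trunc p G N * CD_term p N S1 H S2 (Suc m))
     = (block_row p N S1 l * (gram_trunc p G N * transpose_mat (block_row p N S2 (Suc m))))
         * (minv (H (Suc m)) * block_row p N S1 (Suc m))"
    using Hi unfolding CD_term_def by (simp add: assoc_mult_mat_dim carrier_matD md)
  also have "\<dots> = (if l = Suc m then H (Suc m) * (minv (H (Suc m))
      * block_row p N S1 (Suc m)) else 0\<^sub>m p p * (minv (H (Suc m)) * block_row p N S1 (Suc m)))"
    using l Suc.prems by (simp add: block_row_gram_block_row'[OF gf G p l])
  also have "\<dots> = (if l = Suc m then block_row p N S1 l else 0\<^sub>m p ((N+1)*p))"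
    using right_inverse_mult_cancel[of "H (Suc m)"
        "minv (H (Suc m))" p "block_row p N S1 (Suc m)"] Hi gf unfolding gauss_factorization_def
        by (auto simp: md carrier_matD)
  finally have T: "block_row p N S1 l * (gram_trunc p G N * CD_term p N S1 H S2 (Suc m)) = (if l
      = Suc m then block_row p N S1 l else 0\<^sub>m p ((N+1)*p))" .
  have "block_row p N S1 l * (gram_trunc p G N * CD_coeffs p N S1 H S2 (Suc m))
    = block_row p N S1 l * (gram_trunc p G N * CD_coeffs p N S1 H S2 m) + block_row p N S1 l
        * (gram_trunc p G N * CD_term p N S1 H S2 (Suc m))"
    using Hi by (simp add: mult_add_distrib_mat_dim CD_coeffs_dim CD_term_def carrier_matD md)
  also have "\<dots> = (if l \<le> Suc m then block_row p N S1 l else 0\<^sub>m p ((N+1)*p))"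
    unfolding T Suc.IH[OF Suc_leD[OF Suc.prems]]
        by (auto simp: left_add_zero_mat_dim right_add_zero_mat_dim)
  finally show ?case .
qed

lemma mult_CD_coeffs_eq_zero:
  assumes Hc: "\<forall>k. minv (H k) \<in> carrier_mat p p" and Y: "Y \<in> carrier_mat r ((N+1)*p)"
    and h: "\<forall>k\<le>m. Y * transpose_mat (block_row p N S2 k) = 0\<^sub>m r p"
  shows "Y * CD_coeffs p N S1 H S2 m = 0\<^sub>m r ((N+1)*p)"
  using h
proof (induction m)
  case 0
  have md: "dim_row (minv (H k)) = p" "dim_col (minv (H k)) = p" for k using Hc by auto
  have "Y * CD_coeffs p N S1 H S2 0
      = (Y * transpose_mat (block_row p N S2 0)) * (minv (H 0) * block_row p N S1 0)"
    using Y by (simp add: CD_term_def assoc_mult_mat_dim md carrier_matD)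
  thus ?case using 0 md by simp
next
  case (Suc m)
  have md: "dim_row (minv (H k)) = p" "dim_col (minv (H k)) = p" for k using Hc by auto
  have "Y * CD_coeffs p N S1 H S2 (Suc m)
      = Y * CD_coeffs p N S1 H S2 m + (Y * transpose_mat (block_row p N S2 (Suc m))) * (minv (H (Suc m))
      * block_row p N S1 (Suc m))"
    using Y Hc by (simp add: CD_term_def assoc_mult_mat_dim mult_add_distrib_mat_dim md carrier_matD
        CD_coeffs_dim)
  thus ?case using Suc md by (simp add: left_add_zero_mat_dim)
qed

lemma CD_coeffs_last_block_zero:
  assumes Hc: "\<forall>k. minv (H k) \<in> carrier_mat p p" and b1: "block_lower_unitri p S1" and b2:
      "block_lower_unitri p S2"
    and mN: "m < N" and l: "l < p" and r: "r < (N+1)*p" and p: "p > 0"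
  shows "CD_coeffs p N S1 H S2 m $$ (r, N*p+l) = 0 \<and> CD_coeffs p N S1 H S2 m $$ (N*p+l, r) = 0"
  using mN
proof (induction m)
  have md: "dim_row (minv (H k)) = p" "dim_col (minv (H k)) = p" for k using Hc by auto
  have Nl: "N*p+l < (N+1)*p" using block_index_less[OF l, of N N] by simp
  have Tz: "CD_term p N S1 H S2 k $$ (r, N*p+l) = 0 \<and> CD_term p N S1 H S2 k $$ (N*p+l, r)
      = 0" if k: "k < N" for k
  proof
    have "CD_term p N S1 H S2 k $$ (r, N*p+l)
        = (\<Sum>b<p. (\<Sum>a<p. transpose_mat (block_row p N S2 k) $$ (r,a) * minv (H k) $$ (a,b))
        * block_row p N S1 k $$ (b, N*p+l))"
      unfolding CD_term_def by (rule index_mult_mat3_sum[of _ "(N+1)*p" p _ p _ "(N+1)*p"])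
          (use Hc r Nl in auto)
    also have "\<dots> = 0" using k l Nl p
        by (auto intro!: sum.neutral simp: index_block_row block_lower_unitri_upper_zero[OF b1])
    finally show "CD_term p N S1 H S2 k $$ (r, N*p+l) = 0" .
    have "CD_term p N S1 H S2 k $$ (N*p+l, r)
        = (\<Sum>b<p. (\<Sum>a<p. transpose_mat (block_row p N S2 k) $$ (N*p+l,a) * minv (H k) $$ (a,b))
        * block_row p N S1 k $$ (b, r))"
      unfolding CD_term_def by (rule index_mult_mat3_sum[of _ "(N+1)*p" p _ p _ "(N+1)*p"])
          (use Hc r Nl in auto)
    also have "\<dots> = 0" using k l Nl p
        by (auto intro!: sum.neutral simp: index_block_row block_lower_unitri_upper_zero[OF b2])
    finally show "CD_term p N S1 H S2 k $$ (N*p+l, r) = 0" .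
  qed
  {
    case 0 thus ?case using Tz[of 0] by simp
  next
    case (Suc m)
    have Tc: "CD_term p N S1 H S2 (Suc m) \<in> carrier_mat ((N+1)*p) ((N+1)*p)" using Hc
        by (intro CD_term_carrier) auto
    show ?case using Suc Tz[of "Suc m"] r Nl by (simp add: index_add_mat_carrier[OF Tc])
  }
qed

lemma Mmat_eq_coeffs:
  assumes p: "p > 0" and Hc: "\<forall>k. minv (H k) \<in> carrier_mat p p" and b1: "block_lower_unitri p S1"
    and b2: "block_lower_unitri p S2" and mN: "m \<le> N"
  shows "Mmat p q xs \<kappa> \<beta> S1 H S2 m
      = 1\<^sub>m (NN q \<kappa> * p) + transpose_mat (monomial_jets p q xs \<kappa> N) * CD_coeffs p N S1 H S2 m
      * beta_moments p q \<kappa> \<beta> N"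
proof -
  have Wc: "CD_coeffs p N S1 H S2 m \<in> carrier_mat ((N+1)*p) ((N+1)*p)" using Hc
      by (intro CD_coeffs_carrier) auto
  have Lc: "transpose_mat (monomial_jets p q xs \<kappa> N) * CD_coeffs p N S1 H S2 m 
      \<in> carrier_mat (NN q \<kappa> * p) ((N+1)*p)"
    using Wc by auto
  have Hc': "\<forall>k\<le>m. minv (H k) \<in> carrier_mat p p" using Hc by auto
  show ?thesis unfolding Mmat_def jet01_CDkernel[OF p Hc' b1 b2 mN] pair_col_pmat_of_coeffs[OF Lc p]
      by simp
qed

section \<open>The Uvarov perturbation\<close>

text \<open>Carrier facts in the simp normal form p + N * p of (N + 1) * p.\<close>

lemma block_carriers_simp_normal [simp]:
  "block_row p N S k \<in> carrier_mat p (p + N*p)"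
  "gram_trunc p G N \<in> carrier_mat (p + N*p) (p + N*p)"
  "beta_moments p q \<kappa> \<beta> N \<in> carrier_mat (p + N*p) (NN q \<kappa> * p)"
  "monomial_jets p q xs \<kappa> N \<in> carrier_mat (p + N*p) (NN q \<kappa> * p)"
  "powers_col p N y \<in> carrier_mat (p + N*p) p"
  using block_row_carrier[of p N S k] gram_trunc_carrier[of p G N] beta_moments_carrier[of p q \<kappa> \<beta> N]
    monomial_jets_carrier[of p q xs \<kappa> N] powers_col_carrier[of p N y]
  by simp_all

locale uvarov_perturbation =
  fixes p q :: nat and xs :: "nat \<Rightarrow> real" and \<kappa> :: "nat \<Rightarrow> nat"
    and \<beta> :: "nat \<Rightarrow> nat \<Rightarrow> nat \<Rightarrow> complex mat"
    and u :: "nat \<Rightarrow> nat \<Rightarrow> complex mat"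
    and S1 S2 Sh1 Sh2 :: "nat \<Rightarrow> nat \<Rightarrow> complex mat" and H Hh :: "nat \<Rightarrow> complex mat"
  assumes p_pos: "p > 0"
    and u_carrier: "\<forall>a b. u a b \<in> carrier_mat p p"
    and qd: "quasidefinite p u"
    and qd_hat: "quasidefinite p (uhat p q xs \<kappa> \<beta> u)"
    and gf: "gauss_factorization p u S1 H S2"
    and gf_hat: "gauss_factorization p (uhat p q xs \<kappa> \<beta> u) Sh1 Hh Sh2"
begin

abbreviation "K \<equiv> NN q \<kappa> * p"

abbreviation "Gt n \<equiv> gram_trunc p u n"

abbreviation "B n \<equiv> beta_moments p q \<kappa> \<beta> n"

abbreviation "L n \<equiv> monomial_jets p q xs \<kappa> n"

abbreviation "W n \<equiv> CD_coeffs p n S1 H S2 (n - 1)"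

abbreviation "M \<equiv> Mmat p q xs \<kappa> \<beta> S1 H S2"

abbreviation "Mi n \<equiv> minv (M (n - 1))"

lemma S1_unitri: "block_lower_unitri p S1" and S2_unitri: "block_lower_unitri p S2"
  and Sh1_unitri: "block_lower_unitri p Sh1" and Sh2_unitri: "block_lower_unitri p Sh2"
  and H_carrier: "H k \<in> carrier_mat p p" and Hh_carrier: "Hh k \<in> carrier_mat p p"
  using gf gf_hat unfolding gauss_factorization_def by auto

lemma uhat_carrier': "\<forall>a b. uhat p q xs \<kappa> \<beta> u a b \<in> carrier_mat p p"
  by (rule uhat_carrier[OF u_carrier])

lemma H_inverse: "minv (H k) \<in> carrier_mat p p \<and> H k * minv (H k) = 1\<^sub>m p \<and> minv (H k) * H k = 1\<^sub>m p"
  by (rule minv_inverse[OF H_carrier det_H_nonzero[OF gf u_carrier p_pos qd]])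

lemma minv_H_carrier: "\<forall>k. minv (H k) \<in> carrier_mat p p"
  using H_inverse by blast

lemma CD_coeffs_carrier' [simp]:
  "CD_coeffs p N S1 H S2 m \<in> carrier_mat ((N+1)*p) ((N+1)*p)"
  "CD_coeffs p N S1 H S2 m \<in> carrier_mat (p + N*p) (p + N*p)"
  using CD_coeffs_carrier[of m H p N S1 S2] minv_H_carrier by auto

lemma CD_coeffs_dim' [simp]:
  "dim_row (CD_coeffs p N S1 H S2 m) = (N+1)*p" "dim_col (CD_coeffs p N S1 H S2 m) = (N+1)*p"
  by (rule carrier_matD[OF CD_coeffs_carrier'(1)])+

lemma Mmat_eq: "m \<le> N \<Longrightarrow> M m = 1\<^sub>m K + transpose_mat (L N) * CD_coeffs p N S1 H S2 m * B N"
  by (rule Mmat_eq_coeffs[OF p_pos minv_H_carrier S1_unitri S2_unitri])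

lemma gram_trunc_uhat': "gram_trunc p (uhat p q xs \<kappa> \<beta> u) n = Gt n + B n * transpose_mat (L n)"
  by (rule gram_trunc_uhat[OF p_pos u_carrier])

lemma CD_coeffs_mult_gram_trunc: "CD_coeffs p m S1 H S2 m * Gt m = 1\<^sub>m ((m+1)*p)"
proof -
  let ?D = "(m+1)*p"
  let ?W = "CD_coeffs p m S1 H S2 m"
  define Y where "Y = ?W * Gt m - 1\<^sub>m ?D"
  have Yc: "Y \<in> carrier_mat ?D ?D" unfolding Y_def by (intro minus_carrier_mat one_carrier_mat)
  have orth: "Y * transpose_mat (block_row p m S2 l) = 0\<^sub>m ?D p" if "l < m + 1" for l
  proof -
    have "?W * (Gt m * transpose_mat (block_row p m S2 l)) = transpose_mat (block_row p m S2 l)"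
      using CD_coeffs_gram_block_row[OF gf u_carrier p_pos _ le_refl, where l=l] H_inverse that by simp
    moreover have "Y * transpose_mat (block_row p m S2 l)
        = ?W * (Gt m * transpose_mat (block_row p m S2 l)) - transpose_mat (block_row p m S2 l)"
      unfolding Y_def
      by (subst minus_mult_distrib_mat[of _ ?D ?D]) (auto simp: assoc_mult_mat[of _ ?D ?D _ ?D _ p])
    ultimately show ?thesis by (simp add: minus_r_inv_mat[of _ ?D p])
  qed
  have "Y $$ (i,e) = 0" if "i < ?D" "e < ?D" for i e
    using zero_blocks_of_orth_block_rows[OF Yc S2_unitri p_pos _ orth, of "m+1" "e div p" i "e mod p"]
      p_pos that div_le_of_less_block[OF that(2)]
    by simp
  then show ?thesis unfolding Y_def by (intro eq_matI) auto
qed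

text \<open>Since W inverts G_m, M_m = 1 + L^T W B is the capacitance matrix of G_m + B L^T, the
  truncated Gram matrix of u + v, and Woodbury exhibits an inverse.\<close>

lemma det_Mmat_nonzero: "det (M m) \<noteq> 0"
proof -
  let ?D = "(m+1)*p"
  let ?W = "CD_coeffs p m S1 H S2 m"
  have Ghc: "Gt m + B m * transpose_mat (L m) \<in> carrier_mat ?D ?D" by auto
  obtain Gi where Gi: "Gi \<in> carrier_mat ?D ?D" "(Gt m + B m * transpose_mat (L m)) * Gi = 1\<^sub>m ?D"
    using minv_inverse[OF Ghc] qd_hat gram_trunc_uhat' unfolding quasidefinite_def by metis
  have MX: "(1\<^sub>m K + transpose_mat (L m) * ?W * B m) * (1\<^sub>m K - transpose_mat (L m) * Gi * B m) = 1\<^sub>m K"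
    by (rule woodbury_right_inverse[OF _ _ _ _ Gi(1) CD_coeffs_mult_gram_trunc Gi(2)]) auto
  have Mc: "1\<^sub>m K + transpose_mat (L m) * ?W * B m \<in> carrier_mat K K" by auto
  have Xc: "1\<^sub>m K - transpose_mat (L m) * Gi * B m \<in> carrier_mat K K" using Gi(1) by auto
  have "det (1\<^sub>m K + transpose_mat (L m) * ?W * B m) * det (1\<^sub>m K - transpose_mat (L m) * Gi * B m) = 1"
    using det_mult[OF Mc Xc] MX by simp
  thus ?thesis unfolding Mmat_eq[OF le_refl] by auto
qed

lemma Mi_inverse:
  "Mi n \<in> carrier_mat K K
   \<and> (1\<^sub>m K + transpose_mat (L n) * W n * B n) * Mi n = 1\<^sub>m K
   \<and> Mi n * (1\<^sub>m K + transpose_mat (L n) * W n * B n) = 1\<^sub>m K"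
proof -
  have "M (n - 1) = 1\<^sub>m K + transpose_mat (L n) * W n * B n" by (rule Mmat_eq) simp
  moreover have "M (n - 1) \<in> carrier_mat K K" unfolding calculation by auto
  ultimately show ?thesis using minv_inverse[OF _ det_Mmat_nonzero] by metis
qed

lemma minv_Mmat_carrier [simp]: "minv (M m) \<in> carrier_mat K K"
proof -
  have "M m \<in> carrier_mat K K" unfolding Mmat_eq[OF le_refl] by auto
  then show ?thesis using minv_inverse[OF _ det_Mmat_nonzero] by blast
qed

lemma minv_Mmat_dim [simp]: "dim_row (minv (M m)) = K" "dim_col (minv (M m)) = K"
  by (rule carrier_matD[OF minv_Mmat_carrier])+

lemma CD_coeffs_pred_last_block_zero:
  assumes "n \<ge> 1" "l < p" "r < (n+1)*p"
  shows "W n $$ (r, n*p+l) = 0" "W n $$ (n*p+l, r) = 0"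
  using CD_coeffs_last_block_zero[OF minv_H_carrier S1_unitri S2_unitri _ assms(2,3) p_pos, of "n - 1"]
    assms(1)
  by simp_all

lemma corrected_row_orth:
  assumes l: "l < n"
  shows "(block_row p n S1 n - block_row p n S1 n * B n * Mi n * (transpose_mat (L n) * W n))
    * (Gt n + B n * transpose_mat (L n)) * transpose_mat (block_row p n S2 l) = 0\<^sub>m p p"
proof (rule woodbury_row_orth[where D = "(n+1)*p" and K = K])
  show "block_row p n S1 n * (Gt n * transpose_mat (block_row p n S2 l)) = 0\<^sub>m p p"
    using block_row_gram_block_row'[OF gf u_carrier p_pos, of n n l] l by simp
  show "W n * (Gt n * transpose_mat (block_row p n S2 l)) = transpose_mat (block_row p n S2 l)"
  proof -
    have "l \<le> n - 1" using l by simp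
    then show ?thesis using CD_coeffs_gram_block_row[OF gf u_carrier p_pos, of "n - 1" n l] H_inverse
        by simp
  qed
  show "Mi n * (1\<^sub>m K + transpose_mat (L n) * W n * B n) = 1\<^sub>m K"
    using Mi_inverse by blast
qed auto

lemma block_row_Sh1:
  assumes n: "n \<ge> 1"
  shows "block_row p n Sh1 n
    = block_row p n S1 n - block_row p n S1 n * B n * Mi n * (transpose_mat (L n) * W n)"
proof -
  let ?R = "block_row p n S1 n" and ?D = "(n+1)*p"
  let ?Q = "?R - ?R * B n * Mi n * (transpose_mat (L n) * W n)"
  have "?Q = block_row p n Sh1 n"
  proof (rule block_row_unique[OF gf_hat uhat_carrier' p_pos n qd_hat _ _ S2_unitri])
    show "?Q \<in> carrier_mat p ?D" by auto
    show "?Q $$ (i, n*p+l) = (if i = l then 1 else 0)" if il: "i < p" "l < p" for i l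
    proof -
      have nl: "n*p+l < ?D" using block_index_less[OF il(2), of n n] by simp
      have "(?R * B n * Mi n * (transpose_mat (L n) * W n)) $$ (i, n*p+l)
          = ((?R * B n * Mi n * transpose_mat (L n)) * W n) $$ (i, n*p+l)"
        by (simp add: mat_dim_algebra)
      also have "\<dots> = (\<Sum>s<?D. (?R * B n * Mi n * transpose_mat (L n)) $$ (i,s) * W n $$ (s, n*p+l))"
        by (rule index_mult_mat_sum[of _ p ?D]) (use il nl in auto)
      also have "\<dots> = 0"
        using CD_coeffs_pred_last_block_zero(1)[OF n il(2)] by (intro sum.neutral) simp
      finally show ?thesis
        using il nl p_pos by (simp add: index_block_row block_lower_unitri_diag[OF S1_unitri])
    qed
    show "?Q * gram_trunc p (uhat p q xs \<kappa> \<beta> u) n * transpose_mat (block_row p n S2 l) = 0\<^sub>m p p"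
      if "l < n" for l
      unfolding gram_trunc_uhat' by (rule corrected_row_orth[OF that])
  qed
  then show ?thesis by simp
qed

lemma block_row_Sh2:
  assumes n: "n \<ge> 1"
  shows "transpose_mat (block_row p n Sh2 n) = transpose_mat (block_row p n S2 n)
    - W n * B n * Mi n * (transpose_mat (L n) * transpose_mat (block_row p n S2 n))"
proof -
  let ?R = "block_row p n S2 n" and ?D = "(n+1)*p"
  let ?V = "transpose_mat ?R - W n * B n * Mi n * (transpose_mat (L n) * transpose_mat ?R)"
  have Vc: "?V \<in> carrier_mat ?D p" by auto
  have uT: "\<forall>a b. transpose_mat (uhat p q xs \<kappa> \<beta> u b a) \<in> carrier_mat p p"
    using uhat_carrier' by simp
  have "transpose_mat ?V = block_row p n Sh2 n"
  proof (rule block_row_unique[OF gauss_factorization_transpose[OF gf_hat uhat_carrier'] uT p_pos n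
        quasidefinite_transpose[OF uhat_carrier' p_pos qd_hat] _ _ S1_unitri])
    show "transpose_mat ?V \<in> carrier_mat p ?D" using Vc by simp
    show "transpose_mat ?V $$ (i, n*p+l) = (if i = l then 1 else 0)" if il: "i < p" "l < p" for i l
    proof -
      have nl: "n*p+l < ?D" using block_index_less[OF il(2), of n n] by simp
      have "(W n * B n * Mi n * (transpose_mat (L n) * transpose_mat ?R)) $$ (n*p+l, i)
          = (W n * (B n * Mi n * (transpose_mat (L n) * transpose_mat ?R))) $$ (n*p+l, i)"
        by (simp add: mat_dim_algebra)
      also have "\<dots> = (\<Sum>s<?D. W n $$ (n*p+l, s) * (B n * Mi n * (transpose_mat (L n)
          * transpose_mat ?R)) $$ (s,i))"
        by (rule index_mult_mat_sum[of _ ?D ?D _ p]) (use il nl in auto)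
      also have "\<dots> = 0"
        using CD_coeffs_pred_last_block_zero(2)[OF n il(2)] by (intro sum.neutral) simp
      finally show ?thesis
        using il nl p_pos Vc by (simp add: index_block_row block_lower_unitri_diag[OF S2_unitri])
    qed
    show "transpose_mat ?V * gram_trunc p (\<lambda>a b. transpose_mat (uhat p q xs \<kappa> \<beta> u b a)) n
        * transpose_mat (block_row p n S1 l) = 0\<^sub>m p p" if l: "l < n" for l
    proof -
      have "block_row p n S1 l * (Gt n + B n * transpose_mat (L n)) * ?V = 0\<^sub>m p p"
      proof (rule woodbury_col_orth[where D = ?D and K = K])
        show "block_row p n S1 l * (Gt n * transpose_mat ?R) = 0\<^sub>m p p"
          using block_row_gram_block_row'[OF gf u_carrier p_pos, of l n n] l by simp
        show "block_row p n S1 l * (Gt n * W n) = block_row p n S1 l"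
        proof -
          have "l \<le> n - 1" using l by simp
          then show ?thesis
            using block_row_gram_CD_coeffs[OF gf u_carrier p_pos, of "n - 1" n l] H_inverse by simp
        qed
        show "(1\<^sub>m K + transpose_mat (L n) * W n * B n) * Mi n = 1\<^sub>m K"
          using Mi_inverse by blast
      qed auto
      then show ?thesis
        unfolding gram_trunc_transpose[OF uhat_carrier' p_pos] gram_trunc_uhat'
        by (subst transpose_mult3[of _ p ?D _ ?D _ p, symmetric]) auto
    qed
  qed
  then show ?thesis by (metis transpose_transpose)
qed

lemma Hh_eq:
  assumes n: "n \<ge> 1"
  shows "Hh n = H n + block_row p n S1 n * B n * Mi n * (transpose_mat (L n)
      * transpose_mat (block_row p n S2 n))"
proof -
  let ?R1 = "block_row p n S1 n" and ?R2 = "block_row p n S2 n" and ?D = "(n+1)*p"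
  let ?Q = "?R1 - ?R1 * B n * Mi n * (transpose_mat (L n) * W n)"
  have "Hh n = block_row p n Sh1 n * (Gt n + B n * transpose_mat (L n))
      * transpose_mat (block_row p n Sh2 n)"
    using block_row_gram_block_row[OF gf_hat uhat_carrier' p_pos, of n n n]
        by (simp add: gram_trunc_uhat')
  also have "\<dots> = ?Q * (Gt n + B n * transpose_mat (L n))
      * (transpose_mat ?R2 - W n * B n * Mi n * (transpose_mat (L n) * transpose_mat ?R2))"
    unfolding block_row_Sh1[OF n] block_row_Sh2[OF n] ..
  also have "\<dots> = H n + ?R1 * B n * Mi n * (transpose_mat (L n) * transpose_mat ?R2)"
  proof (rule woodbury_row_col[where D = ?D and K = K])
    show "?R1 * (Gt n * transpose_mat ?R2) = H n"
      using block_row_gram_block_row'[OF gf u_carrier p_pos, of n n n] by simp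
    show "W n * (Gt n * transpose_mat ?R2) = 0\<^sub>m ?D p"
    proof -
      have "\<not> n \<le> n - 1" using n by simp
      then show ?thesis using CD_coeffs_gram_block_row[OF gf u_carrier p_pos, of "n - 1" n n] H_inverse
          by simp
    qed
    show "Mi n * (1\<^sub>m K + transpose_mat (L n) * W n * B n) = 1\<^sub>m K"
      using Mi_inverse by blast
    show "?Q * (Gt n + B n * transpose_mat (L n)) * W n = 0\<^sub>m p ?D"
      using corrected_row_orth n
      by (intro mult_CD_coeffs_eq_zero[OF minv_H_carrier]) auto
  qed (auto intro: H_carrier)
  finally show ?thesis .
qed

lemma bpoly_coeffs:
  assumes "block_lower_unitri p S" "k \<le> N"
  shows "bpoly p S k = pmat_of_coeffs p N (block_row p N S k)"
  by (rule bpoly_eq_pmat_of_coeffs[OF assms p_pos])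

lemma pair_row_bpoly: "pair_row p q \<kappa> \<beta> (bpoly p S1 n) = block_row p n S1 n * B n"
  unfolding bpoly_coeffs[OF S1_unitri le_refl]
      by (rule pair_row_pmat_of_coeffs[OF block_row_carrier p_pos])

lemma jet_bpoly: "jet p q xs \<kappa> (bpoly p S2 n) = block_row p n S2 n * L n"
  unfolding bpoly_coeffs[OF S2_unitri le_refl] by (rule jet_pmat_of_coeffs[OF block_row_carrier p_pos])

lemma meval_bpoly: "block_lower_unitri p S \<Longrightarrow> meval (bpoly p S n) y
    = block_row p n S n * powers_col p n y"
  unfolding bpoly_coeffs[OF _ le_refl] by (rule meval_pmat_of_coeffs[OF block_row_carrier p_pos])

lemma bpoly_Sh1_eq:
  assumes n: "n \<ge> 1"
  shows "bpoly p Sh1 n = bpoly p S1 n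
    - const_pmat (pair_row p q \<kappa> \<beta> (bpoly p S1 n) * Mi n) * jet01 p q xs \<kappa> (CDkernel p S1 H S2 (n - 1))"
proof -
  let ?R = "block_row p n S1 n"
  have "jet01 p q xs \<kappa> (CDkernel p S1 H S2 (n - 1)) = pmat_of_coeffs p n (transpose_mat (L n) * W n)"
    by (rule jet01_CDkernel[OF p_pos _ S1_unitri S2_unitri]) (use minv_H_carrier in auto)
  moreover have "const_pmat (?R * B n * Mi n) * pmat_of_coeffs p n (transpose_mat (L n) * W n)
      = pmat_of_coeffs p n (?R * B n * Mi n * (transpose_mat (L n) * W n))"
    by (rule const_pmat_mult_pmat_of_coeffs) auto
  moreover have "pmat_of_coeffs p n ?R
      - pmat_of_coeffs p n (?R * B n * Mi n * (transpose_mat (L n) * W n))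
      = pmat_of_coeffs p n (block_row p n Sh1 n)"
    unfolding block_row_Sh1[OF n] by (rule pmat_of_coeffs_minus) auto
  ultimately show ?thesis
    unfolding pair_row_bpoly by
        (simp add: bpoly_coeffs[OF S1_unitri le_refl] bpoly_coeffs[OF Sh1_unitri le_refl])
qed

lemma bpoly_Sh2_eval:
  assumes n: "n \<ge> 1"
  shows "transpose_mat (meval (bpoly p Sh2 n) y) = transpose_mat (meval (bpoly p S2 n) y)
    - pair_row p q \<kappa> \<beta> (kernel_at_y (CDkernel p S1 H S2 (n - 1)) y) * Mi n
      * transpose_mat (jet p q xs \<kappa> (bpoly p S2 n))"
proof -
  let ?R = "block_row p n S2 n" and ?X = "powers_col p n y"
  have "kernel_at_y (CDkernel p S1 H S2 (n - 1)) y = pmat_of_coeffs p n (transpose_mat ?X * W n)"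
    by (rule kernel_at_y_CDkernel[OF p_pos _ S1_unitri S2_unitri]) (use minv_H_carrier in auto)
  moreover have "pair_row p q \<kappa> \<beta> (pmat_of_coeffs p n (transpose_mat ?X * W n))
      = transpose_mat ?X * W n * B n"
    by (rule pair_row_pmat_of_coeffs[OF _ p_pos]) auto
  moreover have "transpose_mat (block_row p n Sh2 n * ?X)
      = transpose_mat ?X * transpose_mat (block_row p n Sh2 n)"
    by (rule transpose_mult) auto
  moreover have "transpose_mat (?R * ?X) = transpose_mat ?X * transpose_mat ?R"
    by (rule transpose_mult) auto
  moreover have "transpose_mat (?R * L n) = transpose_mat (L n) * transpose_mat ?R"
    by (rule transpose_mult) auto
  ultimately show ?thesis
    by (simp add: meval_bpoly S2_unitri Sh2_unitri jet_bpoly block_row_Sh2[OF n] mat_dim_algebra)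
qed

lemma Hh_pair_row_jet:
  assumes n: "n \<ge> 1"
  shows "Hh n = H n + pair_row p q \<kappa> \<beta> (bpoly p S1 n) * Mi n
      * transpose_mat (jet p q xs \<kappa> (bpoly p S2 n))"
  unfolding Hh_eq[OF n] pair_row_bpoly jet_bpoly
  by (subst transpose_mult[of _ p "(n+1)*p"]) auto

end

theorem mainTheorem5:
  fixes p q :: nat and xs :: "nat \<Rightarrow> real" and \<kappa> :: "nat \<Rightarrow> nat"
    and \<beta> :: "nat \<Rightarrow> nat \<Rightarrow> nat \<Rightarrow> complex mat"
    and u :: "nat \<Rightarrow> nat \<Rightarrow> complex mat"
    and S1 S2 Sh1 Sh2 :: "nat \<Rightarrow> nat \<Rightarrow> complex mat" and H Hh :: "nat \<Rightarrow> complex mat"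
  assumes p: "p \<ge> 1"
    and nodes: "inj_on xs {..<q}"
    and kappa: "\<forall>j<q. \<kappa> j \<ge> 1"
    and beta_dim: "\<forall>j<q. \<forall>m<\<kappa> j. \<forall>r. \<beta> j m r \<in> carrier_mat p p"
    and u_dim: "\<forall>a b. u a b \<in> carrier_mat p p"
    and qd: "quasidefinite p u"
    and qd_hat: "quasidefinite p (uhat p q xs \<kappa> \<beta> u)"
    and fact: "gauss_factorization p u S1 H S2"
    and fact_hat: "gauss_factorization p (uhat p q xs \<kappa> \<beta> u) Sh1 Hh Sh2"
    and indep: "beta_lin_indep p q \<kappa> \<beta>"
    and perp: "perpR p u (KerR p q \<kappa> \<beta>) = {0\<^sub>m p p} \<or> perpL p u (Iideal p q xs \<kappa>) = {0\<^sub>m p p}"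
  shows "(\<forall>n. det (Mmat p q xs \<kappa> \<beta> S1 H S2 n) \<noteq> 0)
    \<and> (\<forall>n\<ge>1.
        bpoly p Sh1 n = bpoly p S1 n
          - const_pmat (pair_row p q \<kappa> \<beta> (bpoly p S1 n) * minv (Mmat p q xs \<kappa> \<beta> S1 H S2 (n - 1)))
            * jet01 p q xs \<kappa> (CDkernel p S1 H S2 (n - 1))
      \<and> (\<forall>y::complex. transpose_mat (meval (bpoly p Sh2 n) y) = transpose_mat (meval (bpoly p S2 n) y)
          - pair_row p q \<kappa> \<beta> (kernel_at_y (CDkernel p S1 H S2 (n - 1)) y)
            * minv (Mmat p q xs \<kappa> \<beta> S1 H S2 (n - 1)) * transpose_mat (jet p q xs \<kappa> (bpoly p S2 n)))
      \<and> Hh n = H n + pair_row p q \<kappa> \<beta> (bpoly p S1 n) * minv (Mmat p q xs \<kappa> \<beta> S1 H S2 (n - 1))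
            * transpose_mat (jet p q xs \<kappa> (bpoly p S2 n)))"
proof -
  interpret uvarov_perturbation p q xs \<kappa> \<beta> u S1 S2 Sh1 Sh2 H Hh
    using p u_dim qd qd_hat fact fact_hat by unfold_locales auto
  show ?thesis using det_Mmat_nonzero bpoly_Sh1_eq bpoly_Sh2_eval Hh_pair_row_jet by blast
qed

end
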